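(* Let $X$ be a $d$-dimensional clique complex, let $d_1$ satisfy $3d_1\le d-2$, and assume $X$ is $d_1$-well-connected. Let $\nu:\widetilde{F^{d_1}X}\to F^{d_1}X$ be an $\ell$-covering map. Then there exists an $\ell$-covering map $\rho:Y\to X$ and an isomorphism of simplicial complexes $\iota:F^{d_1}Y\to\widetilde{F^{d_1}X}$ satisfying $\nu(\iota(\tilde s))=\rho(\tilde s)$ for every vertex $\tilde s$ of $F^{d_1}Y$.
   Context: A pure $d$-dimensional simplicial complex $X$; $X(i)$ = faces with $i+1$ vertices; link $X_r=\{t\setminus r:r\subseteq t\in X\}$. Clique complex: every set of vertices pairwise joined by edges is a face. Faces complex $F^{d_1}X$: vertex set $X(d_1)$, faces the sets $\{s_0,\dots,s_j\}$ of pairwise disjoint $d_1$-faces with $s_0\cup\dots\cup s_j\in X$; $F^{d_1}X_r:=F^{d_1}(X_r)$. Covering map: $\rho:Y(0)\to X(0)$ a surjective simplicial homomorphism restricting to an isomorphism $Y_{\tilde v}\to X_{\rho(\tilde v)}$ for every vertex $\tilde v$; $\ell$-cover if each vertex has $\ell$ preimages. A connected complex is simply connected if every $\ell$-cover of it is a disjoint union of $\ell$ connected components each mapped isomorphically onto it. $X$ is $d_1$-well-connected if for every face $r$ of dimension $\le d_1$ (including $\emptyset$), $F^{d_1}(X_r)$ is connected, and for every vertex $r$ it is moreover simply connected. *)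

theory Defs
  imports Main
begin

text \<open>Simplicial complexes are represented by their set of faces (including the empty face).\<close>

definition simplicial_complex :: "'a set set \<Rightarrow> bool" where
  "simplicial_complex X \<longleftrightarrow> (\<forall>s\<in>X. finite s) \<and> (\<forall>s\<in>X. \<forall>t. t \<subseteq> s \<longrightarrow> t \<in> X)"

definition faces_of_dim :: "'a set set \<Rightarrow> nat \<Rightarrow> 'a set set" where
  "faces_of_dim X i = {s \<in> X. card s = i + 1}"

definition vertices :: "'a set set \<Rightarrow> 'a set" where
  "vertices X = {v. {v} \<in> X}"

definition pure_complex :: "nat \<Rightarrow> 'a set set \<Rightarrow> bool" where
  "pure_complex d X \<longleftrightarrow> simplicial_complex X
     \<and> (\<exists>t\<in>X. card t = d + 1)
     \<and> (\<forall>s\<in>X. card s \<le> d + 1)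
     \<and> (\<forall>s\<in>X. \<exists>t\<in>X. s \<subseteq> t \<and> card t = d + 1)"

definition link :: "'a set set \<Rightarrow> 'a set \<Rightarrow> 'a set set" where
  "link X r = {t - r | t. t \<in> X \<and> r \<subseteq> t}"

definition clique_complex :: "'a set set \<Rightarrow> bool" where
  "clique_complex X \<longleftrightarrow> (\<forall>s. finite s \<and> s \<subseteq> vertices X \<and> (\<forall>u\<in>s. \<forall>v\<in>s. u \<noteq> v \<longrightarrow> {u, v} \<in> X) \<longrightarrow> s \<in> X)"

definition faces_complex :: "nat \<Rightarrow> 'a set set \<Rightarrow> 'a set set set" where
  "faces_complex d1 X = {S. finite S \<and> S \<subseteq> faces_of_dim X d1 \<and> (\<forall>s\<in>S. \<forall>t\<in>S. s \<noteq> t \<longrightarrow> s \<inter> t = {}) \<and> \<Union>S \<in> X}"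

definition simplicial_hom :: "('a \<Rightarrow> 'b) \<Rightarrow> 'a set set \<Rightarrow> 'b set set \<Rightarrow> bool" where
  "simplicial_hom f A B \<longleftrightarrow> f ` vertices A \<subseteq> vertices B \<and> (\<forall>s\<in>A. f ` s \<in> B)"

definition simplicial_iso :: "('a \<Rightarrow> 'b) \<Rightarrow> 'a set set \<Rightarrow> 'b set set \<Rightarrow> bool" where
  "simplicial_iso f A B \<longleftrightarrow> bij_betw f (vertices A) (vertices B)
     \<and> (\<forall>s. s \<subseteq> vertices A \<longrightarrow> (s \<in> A \<longleftrightarrow> f ` s \<in> B))"

definition covering_map :: "('b \<Rightarrow> 'a) \<Rightarrow> 'b set set \<Rightarrow> 'a set set \<Rightarrow> bool" where
  "covering_map \<rho> Y X \<longleftrightarrow> simplicial_hom \<rho> Y X \<and> \<rho> ` vertices Y = vertices X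
     \<and> (\<forall>v\<in>vertices Y. simplicial_iso \<rho> (link Y {v}) (link X {\<rho> v}))"

definition l_covering_map :: "nat \<Rightarrow> ('b \<Rightarrow> 'a) \<Rightarrow> 'b set set \<Rightarrow> 'a set set \<Rightarrow> bool" where
  "l_covering_map l \<rho> Y X \<longleftrightarrow> simplicial_complex Y \<and> covering_map \<rho> Y X
     \<and> (\<forall>v\<in>vertices X. finite {w \<in> vertices Y. \<rho> w = v} \<and> card {w \<in> vertices Y. \<rho> w = v} = l)"

definition edge_rel :: "'a set set \<Rightarrow> ('a \<times> 'a) set" where
  "edge_rel X = {(u, v). {u, v} \<in> X}"

definition connected_complex :: "'a set set \<Rightarrow> bool" where
  "connected_complex X \<longleftrightarrow> (\<forall>u\<in>vertices X. \<forall>v\<in>vertices X. (u, v) \<in> (edge_rel X)\<^sup>*)"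

definition components :: "'a set set \<Rightarrow> 'a set set" where
  "components X = {{u \<in> vertices X. (w, u) \<in> (edge_rel X)\<^sup>*} | w. w \<in> vertices X}"

text \<open>Covers are taken with vertex type
  'a \<times> nat, which is no loss of generality (every l-cover is isomorphic to one of this form).\<close>
definition simply_connected :: "'a set set \<Rightarrow> bool" where
  "simply_connected X \<longleftrightarrow> connected_complex X \<and>
     (\<forall>l (Y :: ('a \<times> nat) set set) \<rho>. l_covering_map l \<rho> Y X \<longrightarrow>
        card (components Y) = l \<and>
        (\<forall>C\<in>components Y. simplicial_iso \<rho> {s \<in> Y. s \<subseteq> C} X))"

definition well_connected :: "nat \<Rightarrow> 'a set set \<Rightarrow> bool" where
  "well_connected d1 X \<longleftrightarrow> (\<forall>r\<in>X. card r \<le> d1 + 1 \<longrightarrow>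
       connected_complex (faces_complex d1 (link X r))
     \<and> (card r = 1 \<longrightarrow> simply_connected (faces_complex d1 (link X r))))"

end

(* Write F for the faces complex F^{d1} X and let Z be an l-cover of F. For a vertex v of X the
   cover restricts to a cover of F(X_v), which is simply connected; so over F(X_v) it splits into
   l sheets, each mapped isomorphically onto F(X_v). Call sheet i over v and sheet j over w
   compatible if some vertex of Z over F(X_{v,w}) lies in both. Connectivity of F(X_{v,w}) (for
   d1 = 0, a direct argument through triangles of X instead) shows that every sheet over v is
   compatible with exactly one sheet over w, and compatibility propagates around triangles of X.
   Since X is a clique complex, the clique complex Y of the compatibility graph on
   X(0) x {0..<l} is an l-cover of X. Finally a vertex z of Z over a d1-face s of X selects, for
   each v in s, the sheet over v containing the neighbours of z; this gives a d1-face of Y over s,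
   and the resulting map is an isomorphism from Z onto F^{d1} Y. The bound 3 d1 + 2 <= d leaves
   room in X for the auxiliary d1-faces that these arguments lift. *)

theory Submission
  imports Defs
begin

lemma mem_link: "\<tau> \<in> link X r \<longleftrightarrow> \<tau> \<inter> r = {} \<and> \<tau> \<union> r \<in> X"
proof
  assume "\<tau> \<in> link X r"
  then obtain t where "t \<in> X" "r \<subseteq> t" "\<tau> = t - r" unfolding link_def by blast
  then show "\<tau> \<inter> r = {} \<and> \<tau> \<union> r \<in> X" by (auto simp: Un_absorb2)
next
  assume "\<tau> \<inter> r = {} \<and> \<tau> \<union> r \<in> X"
  then show "\<tau> \<in> link X r" unfolding link_def by (intro CollectI exI[of _ "\<tau> \<union> r"]) auto
qed

lemma mem_vertices: "v \<in> vertices X \<longleftrightarrow> {v} \<in> X"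
  by (simp add: vertices_def)

lemma vertices_link_singleton: "vertices (link X {v}) = {w. w \<noteq> v \<and> {v, w} \<in> X}"
  unfolding vertices_def mem_link by (auto simp: insert_commute)

lemma vertices_faces_complex: "vertices (faces_complex d1 X) = faces_of_dim X d1"
  unfolding vertices_def faces_complex_def faces_of_dim_def by auto

lemma mem_edge_rel: "(u, v) \<in> edge_rel X \<longleftrightarrow> {u, v} \<in> X"
  by (simp add: edge_rel_def)

lemma edge_rel_rtrancl_sym: "(a, b) \<in> (edge_rel X)\<^sup>* \<Longrightarrow> (b, a) \<in> (edge_rel X)\<^sup>*"
proof -
  have "sym (edge_rel X)" by (rule symI) (simp add: mem_edge_rel insert_commute)
  then have "sym ((edge_rel X)\<^sup>*)" by (rule sym_rtrancl)
  then show "(a, b) \<in> (edge_rel X)\<^sup>* \<Longrightarrow> (b, a) \<in> (edge_rel X)\<^sup>*" by (rule symD)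
qed

context
  fixes X :: "'a set set"
  assumes X: "simplicial_complex X"
begin

lemma face_subset: "s \<in> X \<Longrightarrow> t \<subseteq> s \<Longrightarrow> t \<in> X"
  using X unfolding simplicial_complex_def by blast

lemma face_finite: "s \<in> X \<Longrightarrow> finite s"
  using X unfolding simplicial_complex_def by blast

lemma face_subset_vertices: "s \<in> X \<Longrightarrow> s \<subseteq> vertices X"
  using face_subset by (auto simp: mem_vertices)

lemma empty_face: "X \<noteq> {} \<Longrightarrow> {} \<in> X"
  using face_subset by blast

lemma edge_rel_rtrancl_vertices:
  assumes "(a, b) \<in> (edge_rel X)\<^sup>*" "a \<in> vertices X" shows "b \<in> vertices X"
  using assms
proof (induction rule: rtrancl_induct)
  case (step y z)
  then show ?case using face_subset[of "{y, z}" "{z}"] by (simp add: mem_edge_rel mem_vertices)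
qed

lemma simplicial_complex_link: "simplicial_complex (link X r)"
  unfolding simplicial_complex_def
proof (intro conjI ballI allI impI)
  fix s assume "s \<in> link X r"
  then show "finite s" using face_finite by (auto simp: mem_link)
next
  fix s t assume "s \<in> link X r" "t \<subseteq> s"
  then show "t \<in> link X r" using face_subset[of "s \<union> r" "t \<union> r"] by (auto simp: mem_link)
qed

lemma simplicial_complex_restrict:
  assumes B: "simplicial_complex B" shows "simplicial_complex {\<sigma> \<in> X. f ` \<sigma> \<in> B}"
  unfolding simplicial_complex_def
proof (intro conjI ballI allI impI)
  fix s assume "s \<in> {\<sigma> \<in> X. f ` \<sigma> \<in> B}"
  then show "finite s" using face_finite by blast
next
  fix s t assume "s \<in> {\<sigma> \<in> X. f ` \<sigma> \<in> B}" "t \<subseteq> s"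
  then show "t \<in> {\<sigma> \<in> X. f ` \<sigma> \<in> B}"
    using face_subset[of s t] B image_mono[of t s f] unfolding simplicial_complex_def by blast
qed

lemma simplicial_complex_faces_complex: "simplicial_complex (faces_complex d1 X)"
  unfolding simplicial_complex_def
proof (intro conjI ballI allI impI)
  fix S assume "S \<in> faces_complex d1 X"
  then show "finite S" by (simp add: faces_complex_def)
next
  fix S T assume S: "S \<in> faces_complex d1 X" and "T \<subseteq> S"
  have "\<Union>T \<in> X" using S \<open>T \<subseteq> S\<close> face_subset[of "\<Union>S" "\<Union>T"] Union_mono
    by (auto simp: faces_complex_def)
  with S \<open>T \<subseteq> S\<close> show "T \<in> faces_complex d1 X"
    unfolding faces_complex_def by (auto intro: finite_subset; blast)
qed

lemma faces_complex_link_iff: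
  "S \<in> faces_complex d1 (link X r) \<longleftrightarrow>
     S \<in> faces_complex d1 X \<and> \<Union>S \<inter> r = {} \<and> \<Union>S \<union> r \<in> X"
proof (cases "\<Union>S \<inter> r = {} \<and> \<Union>S \<union> r \<in> X")
  case True
  have "s \<in> faces_of_dim (link X r) d1 \<longleftrightarrow> s \<in> faces_of_dim X d1" if "s \<in> S" for s
  proof -
    have "s \<union> r \<subseteq> \<Union>S \<union> r" "s \<subseteq> \<Union>S \<union> r" using that by auto
    then have "s \<union> r \<in> X" "s \<in> X" using True face_subset by blast+
    moreover have "s \<inter> r = {}" using that True by auto
    ultimately show ?thesis by (simp add: faces_of_dim_def mem_link)
  qed
  then have "S \<subseteq> faces_of_dim (link X r) d1 \<longleftrightarrow> S \<subseteq> faces_of_dim X d1" by blast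
  moreover have "\<Union>S \<in> X" using True face_subset[of "\<Union>S \<union> r" "\<Union>S"] by blast
  ultimately show ?thesis using True by (simp add: faces_complex_def mem_link)
next
  case False
  then show ?thesis by (auto simp: faces_complex_def mem_link)
qed

end

lemma simplicial_iso_bij: "simplicial_iso f A B \<Longrightarrow> bij_betw f (vertices A) (vertices B)"
  unfolding simplicial_iso_def by blast

lemma simplicial_iso_face_iff:
  "simplicial_iso f A B \<Longrightarrow> s \<subseteq> vertices A \<Longrightarrow> s \<in> A \<longleftrightarrow> f ` s \<in> B"
  unfolding simplicial_iso_def by blast

lemma simplicial_isoI:
  "bij_betw f (vertices A) (vertices B) \<Longrightarrow> (\<And>s. s \<subseteq> vertices A \<Longrightarrow> s \<in> A \<longleftrightarrow> f ` s \<in> B)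
    \<Longrightarrow> simplicial_iso f A B"
  unfolding simplicial_iso_def by blast

lemma simplicial_iso_inv:
  assumes iso: "simplicial_iso f A B"
  shows "simplicial_iso (inv_into (vertices A) f) B A"
proof (rule simplicial_isoI)
  have bij: "bij_betw f (vertices A) (vertices B)" using simplicial_iso_bij[OF iso] .
  then show "bij_betw (inv_into (vertices A) f) (vertices B) (vertices A)" by (rule bij_betw_inv_into)
  fix s assume s: "s \<subseteq> vertices B"
  let ?g = "inv_into (vertices A) f"
  have "?g ` s \<subseteq> vertices A" using s bij_betw_inv_into[OF bij] by (auto simp: bij_betw_def)
  moreover have "f ` ?g ` s = s"
    using s bij by (force simp: bij_betw_def image_image f_inv_into_f)
  ultimately show "s \<in> B \<longleftrightarrow> ?g ` s \<in> A" using simplicial_iso_face_iff[OF iso] by metis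
qed

lemma simplicial_iso_comp:
  assumes f: "simplicial_iso f A B" and h: "simplicial_iso h B C"
  shows "simplicial_iso (h \<circ> f) A C"
proof (rule simplicial_isoI)
  show "bij_betw (h \<circ> f) (vertices A) (vertices C)"
    using simplicial_iso_bij[OF f] simplicial_iso_bij[OF h] by (rule bij_betw_trans)
  fix s assume s: "s \<subseteq> vertices A"
  then have "f ` s \<subseteq> vertices B" using simplicial_iso_bij[OF f] by (auto simp: bij_betw_def)
  then show "s \<in> A \<longleftrightarrow> (h \<circ> f) ` s \<in> C"
    using simplicial_iso_face_iff[OF f s] simplicial_iso_face_iff[OF h] by (simp add: image_comp)
qed

lemma simplicial_iso_cong:
  assumes iso: "simplicial_iso f A B" and eq: "\<And>x. x \<in> vertices A \<Longrightarrow> g x = f x"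
  shows "simplicial_iso g A B"
proof (rule simplicial_isoI)
  show "bij_betw g (vertices A) (vertices B)"
    using simplicial_iso_bij[OF iso] bij_betw_cong[of "vertices A" g f] eq by blast
  fix s assume "s \<subseteq> vertices A"
  moreover from this have "g ` s = f ` s" using eq by (intro image_cong) auto
  ultimately show "s \<in> A \<longleftrightarrow> g ` s \<in> B" using simplicial_iso_face_iff[OF iso] by simp
qed

lemma simplicial_iso_restrict:
  assumes iso: "simplicial_iso f A B" and sub: "B' \<subseteq> B"
  shows "simplicial_iso f {\<sigma>\<in>A. f ` \<sigma> \<in> B'} B'"
proof (rule simplicial_isoI)
  have vA': "vertices {\<sigma>\<in>A. f ` \<sigma> \<in> B'} = {x \<in> vertices A. f x \<in> vertices B'}"
    unfolding vertices_def by auto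
  have "vertices B' \<subseteq> vertices B" using sub unfolding vertices_def by blast
  then show "bij_betw f (vertices {\<sigma>\<in>A. f ` \<sigma> \<in> B'}) (vertices B')"
    unfolding vA' using simplicial_iso_bij[OF iso]
    by (auto simp: bij_betw_def inj_on_def image_iff)
  fix s assume "s \<subseteq> vertices {\<sigma>\<in>A. f ` \<sigma> \<in> B'}"
  then have "s \<subseteq> vertices A" unfolding vA' by blast
  then show "s \<in> {\<sigma>\<in>A. f ` \<sigma> \<in> B'} \<longleftrightarrow> f ` s \<in> B'"
    using simplicial_iso_face_iff[OF iso] sub by blast
qed

context
  fixes A :: "'a set set" and g :: "'a \<Rightarrow> 'b"
  assumes A: "simplicial_complex A" and inj: "inj_on g (vertices A)"
begin

lemma simplicial_complex_image: "simplicial_complex ((`) g ` A)"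
  unfolding simplicial_complex_def
proof (intro conjI ballI allI impI)
  fix s assume "s \<in> (`) g ` A" then show "finite s" using face_finite[OF A] by blast
next
  fix s t assume "s \<in> (`) g ` A" "t \<subseteq> s"
  then obtain \<sigma> where "\<sigma> \<in> A" "s = g ` \<sigma>" by blast
  then have "t = g ` {x \<in> \<sigma>. g x \<in> t}" "{x \<in> \<sigma>. g x \<in> t} \<in> A"
    using \<open>t \<subseteq> s\<close> face_subset[OF A] by auto
  then show "t \<in> (`) g ` A" by blast
qed

lemma vertices_image: "vertices ((`) g ` A) = g ` vertices A"
proof (intro set_eqI iffI)
  fix y assume "y \<in> vertices ((`) g ` A)"
  then obtain \<sigma> where \<sigma>: "\<sigma> \<in> A" "g ` \<sigma> = {y}" unfolding vertices_def by blast
  then obtain x where "x \<in> \<sigma>" "g x = y" by blast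
  then show "y \<in> g ` vertices A" using face_subset_vertices[OF A \<sigma>(1)] by blast
next
  fix y assume "y \<in> g ` vertices A"
  then obtain x where "{x} \<in> A" "y = g x" by (auto simp: mem_vertices)
  moreover have "g ` {x} = {g x}" by simp
  ultimately show "y \<in> vertices ((`) g ` A)" unfolding mem_vertices by (metis imageI)
qed

lemma simplicial_iso_image: "simplicial_iso g A ((`) g ` A)"
proof (rule simplicial_isoI)
  show "bij_betw g (vertices A) (vertices ((`) g ` A))"
    unfolding vertices_image using inj by (simp add: bij_betw_def)
  fix s assume s: "s \<subseteq> vertices A"
  have "s \<in> A" if "\<sigma> \<in> A" "g ` s = g ` \<sigma>" for \<sigma>
    using that inj s face_subset_vertices[OF A] by (metis inj_on_image_eq_iff)
  then show "s \<in> A \<longleftrightarrow> g ` s \<in> (`) g ` A" by blast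
qed

lemma link_image:
  assumes x: "x \<in> vertices A"
  shows "link ((`) g ` A) {g x} = (`) g ` link A {x}"
proof (intro set_eqI iffI)
  fix \<tau>' assume "\<tau>' \<in> link ((`) g ` A) {g x}"
  then obtain \<sigma> where \<sigma>: "\<sigma> \<in> A" "\<tau>' \<union> {g x} = g ` \<sigma>" "g x \<notin> \<tau>'" by (auto simp: mem_link)
  have sv: "\<sigma> \<subseteq> vertices A" using face_subset_vertices[OF A \<sigma>(1)] .
  then have "x \<in> \<sigma>" using \<sigma>(2) inj x by (metis Un_iff singletonI inj_on_image_mem_iff)
  moreover have "g ` (\<sigma> - {x}) = \<tau>'"
    using inj_on_image_set_diff[OF inj _, of \<sigma> "{x}"] sv x \<sigma>(2,3) by auto
  ultimately show "\<tau>' \<in> (`) g ` link A {x}"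
    using \<sigma>(1) by (auto simp: mem_link insert_absorb intro!: image_eqI[of _ _ "\<sigma> - {x}"])
next
  fix \<tau>' assume "\<tau>' \<in> (`) g ` link A {x}"
  then obtain \<tau> where \<tau>: "\<tau>' = g ` \<tau>" "x \<notin> \<tau>" "\<tau> \<union> {x} \<in> A" by (auto simp: mem_link)
  have "g x \<notin> g ` \<tau>"
    using inj face_subset_vertices[OF A \<tau>(3)] \<tau>(2) by (simp add: inj_on_image_mem_iff)
  moreover have "g ` \<tau> \<union> {g x} \<in> (`) g ` A" using \<tau>(3) by (metis image_insert insert_is_Un Un_commute imageI)
  ultimately show "\<tau>' \<in> link ((`) g ` A) {g x}" using \<tau>(1) by (simp add: mem_link)
qed

lemma simplicial_iso_relabel:
  assumes iso: "simplicial_iso \<pi> A B" and eq: "\<And>x. x \<in> vertices A \<Longrightarrow> \<pi>' (g x) = \<pi> x"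
  shows "simplicial_iso \<pi>' ((`) g ` A) B"
proof (rule simplicial_iso_cong)
  show "simplicial_iso (\<pi> \<circ> inv_into (vertices A) g) ((`) g ` A) B"
    using simplicial_iso_comp[OF simplicial_iso_inv[OF simplicial_iso_image] iso] .
  show "\<pi>' y = (\<pi> \<circ> inv_into (vertices A) g) y" if "y \<in> vertices ((`) g ` A)" for y
    using that eq inj by (auto simp: vertices_image inv_into_f_f)
qed
end

section \<open>Covering maps\<close>

lemma link_mono: "B' \<subseteq> B \<Longrightarrow> link B' r \<subseteq> link B r"
  unfolding link_def by blast

context
  fixes \<pi> :: "'b \<Rightarrow> 'a" and A :: "'b set set" and B :: "'a set set"
  assumes cov: "covering_map \<pi> A B" and A: "simplicial_complex A"
begin

lemma covering_map_link_iso: "z \<in> vertices A \<Longrightarrow> simplicial_iso \<pi> (link A {z}) (link B {\<pi> z})"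
  using cov unfolding covering_map_def by blast

lemma covering_map_face: "\<sigma> \<in> A \<Longrightarrow> \<pi> ` \<sigma> \<in> B"
  using cov unfolding covering_map_def simplicial_hom_def by blast

lemma covering_map_edge:
  assumes "{z, a} \<in> A" "a \<noteq> z"
  shows "\<pi> a \<noteq> \<pi> z" "{\<pi> z, \<pi> a} \<in> B"
proof -
  have "z \<in> vertices A" using face_subset_vertices[OF A assms(1)] by blast
  moreover have "a \<in> vertices (link A {z})" using assms by (simp add: vertices_link_singleton)
  ultimately have "\<pi> a \<in> vertices (link B {\<pi> z})"
    using simplicial_iso_bij[OF covering_map_link_iso] by (auto simp: bij_betw_def)
  then show "\<pi> a \<noteq> \<pi> z" "{\<pi> z, \<pi> a} \<in> B" by (simp_all add: vertices_link_singleton)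
qed

lemma covering_map_inj_on_face:
  assumes "\<sigma> \<in> A" shows "inj_on \<pi> \<sigma>"
proof (rule inj_onI, rule ccontr)
  fix a b assume "a \<in> \<sigma>" "b \<in> \<sigma>" "\<pi> a = \<pi> b" "a \<noteq> b"
  moreover from this have "{a, b} \<in> A" using face_subset[OF A assms] by simp
  ultimately show False using covering_map_edge(1)[of a b] by simp
qed

lemma covering_map_neighbour_inj:
  assumes za: "{z, a} \<in> A" and zb: "{z, b} \<in> A" and eq: "\<pi> a = \<pi> b"
  shows "a = b"
proof (cases "a = z \<or> b = z")
  case True
  then show ?thesis using covering_map_edge(1)[OF za] covering_map_edge(1)[OF zb] eq by metis
next
  case False
  then have "a \<in> vertices (link A {z})" "b \<in> vertices (link A {z})"
    using za zb by (auto simp: vertices_link_singleton)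
  moreover have "z \<in> vertices A" using face_subset_vertices[OF A za] by blast
  then have "inj_on \<pi> (vertices (link A {z}))"
    using simplicial_iso_bij[OF covering_map_link_iso] by (simp add: bij_betw_def)
  ultimately show ?thesis using eq by (blast dest: inj_onD)
qed

lemma covering_map_lift_face:
  assumes B: "simplicial_complex B" and S: "S \<in> B"
    and z: "z \<in> vertices A" and zS: "\<pi> z \<in> S"
  obtains \<sigma> where "\<sigma> \<in> A" "z \<in> \<sigma>" "\<pi> ` \<sigma> = S"
proof -
  have iso: "simplicial_iso \<pi> (link A {z}) (link B {\<pi> z})" using covering_map_link_iso[OF z] .
  let ?T = "S - {\<pi> z}"
  have T: "?T \<in> link B {\<pi> z}" using S zS by (auto simp: mem_link insert_absorb)
  have "?T \<subseteq> vertices (link B {\<pi> z})"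
  proof
    fix u assume "u \<in> ?T"
    then have "{\<pi> z, u} \<in> B" "u \<noteq> \<pi> z" using face_subset[OF B S, of "{\<pi> z, u}"] zS by auto
    then show "u \<in> vertices (link B {\<pi> z})" by (simp add: vertices_link_singleton)
  qed
  then have "?T \<subseteq> \<pi> ` vertices (link A {z})"
    using simplicial_iso_bij[OF iso] by (simp add: bij_betw_def)
  then obtain \<tau> where \<tau>: "\<tau> \<subseteq> vertices (link A {z})" "?T = \<pi> ` \<tau>"
    by (rule subset_imageE)
  then have "\<tau> \<in> link A {z}" using simplicial_iso_face_iff[OF iso \<tau>(1)] T by simp
  then have "insert z \<tau> \<in> A" by (simp add: mem_link)
  moreover have "\<pi> ` insert z \<tau> = S" using \<tau>(2) zS by blast
  ultimately show ?thesis using that by blast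
qed

lemma covering_map_lift_face_extending:
  assumes B: "simplicial_complex B" and \<tau>: "\<tau> \<in> A" "\<tau> \<noteq> {}"
    and S: "S \<in> B" "\<pi> ` \<tau> \<subseteq> S"
  obtains \<sigma> where "\<sigma> \<in> A" "\<tau> \<subseteq> \<sigma>" "\<pi> ` \<sigma> = S"
proof -
  obtain z where z: "z \<in> \<tau>" using \<tau>(2) by blast
  have zA: "z \<in> vertices A" using z face_subset_vertices[OF A \<tau>(1)] by blast
  have zS: "\<pi> z \<in> S" using z S(2) by blast
  obtain \<sigma> where \<sigma>: "\<sigma> \<in> A" "z \<in> \<sigma>" "\<pi> ` \<sigma> = S"
    by (rule covering_map_lift_face[OF B S(1) zA zS])
  have "y \<in> \<sigma>" if y: "y \<in> \<tau>" for y
  proof -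
    obtain u where u: "u \<in> \<sigma>" "\<pi> u = \<pi> y" using \<sigma>(3) y S(2) by (metis image_subset_iff imageE)
    have "{z, u} \<in> A" "{z, y} \<in> A" using face_subset[OF A] \<sigma> \<tau>(1) u(1) y z by auto
    then show ?thesis using covering_map_neighbour_inj u by metis
  qed
  then show ?thesis using that \<sigma> by blast
qed

end

lemma l_covering_mapD:
  assumes "l_covering_map l \<pi> A B"
  shows "simplicial_complex A" "covering_map \<pi> A B" "\<pi> ` vertices A = vertices B"
    "\<And>v. v \<in> vertices B \<Longrightarrow> finite {w \<in> vertices A. \<pi> w = v} \<and> card {w \<in> vertices A. \<pi> w = v} = l"
  using assms unfolding l_covering_map_def covering_map_def by blast+

lemma link_restrict:
  assumes cov: "covering_map \<pi> A B" and A: "simplicial_complex A"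
  shows "link {\<sigma>\<in>A. \<pi> ` \<sigma> \<in> B'} {z} = {\<tau> \<in> link A {z}. \<pi> ` \<tau> \<in> link B' {\<pi> z}}"
proof (intro set_eqI)
  fix \<tau>
  have "\<pi> ` \<tau> \<inter> {\<pi> z} = {}" if "\<tau> \<inter> {z} = {}" "\<tau> \<union> {z} \<in> A"
    using covering_map_inj_on_face[OF cov A that(2)] that(1) by (auto simp: inj_on_def)
  then show "\<tau> \<in> link {\<sigma>\<in>A. \<pi> ` \<sigma> \<in> B'} {z} \<longleftrightarrow> \<tau> \<in> {\<tau> \<in> link A {z}. \<pi> ` \<tau> \<in> link B' {\<pi> z}}"
    by (auto simp: mem_link)
qed

lemma l_covering_map_restrict:
  assumes cov: "l_covering_map l \<pi> A B" and sub: "B' \<subseteq> B" and B': "simplicial_complex B'"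
  shows "l_covering_map l \<pi> {\<sigma>\<in>A. \<pi> ` \<sigma> \<in> B'} B'"
proof -
  let ?A = "{\<sigma>\<in>A. \<pi> ` \<sigma> \<in> B'}"
  note A = l_covering_mapD(1)[OF cov] and c = l_covering_mapD(2)[OF cov]
  have vA': "vertices ?A = {x \<in> vertices A. \<pi> x \<in> vertices B'}"
    unfolding vertices_def by auto
  have vB': "vertices B' \<subseteq> vertices B" using sub unfolding vertices_def by blast
  have surj: "\<pi> ` vertices ?A = vertices B'"
  proof
    show "vertices B' \<subseteq> \<pi> ` vertices ?A"
      using l_covering_mapD(3)[OF cov] vB' unfolding vA' by (auto intro: image_eqI)
  qed (auto simp: vA')
  have "simplicial_iso \<pi> (link ?A {z}) (link B' {\<pi> z})" if "z \<in> vertices ?A" for z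
  proof -
    have "z \<in> vertices A" using that vA' by blast
    then show ?thesis unfolding link_restrict[OF c A]
      by (rule simplicial_iso_restrict[OF covering_map_link_iso[OF c A] link_mono[OF sub]])
  qed
  moreover have "simplicial_complex ?A" using A B' by (rule simplicial_complex_restrict)
  moreover have "{w \<in> vertices ?A. \<pi> w = v} = {w \<in> vertices A. \<pi> w = v}" if "v \<in> vertices B'" for v
    unfolding vA' using that by auto
  ultimately show ?thesis
    unfolding l_covering_map_def covering_map_def simplicial_hom_def
    using surj vB' l_covering_mapD(4)[OF cov] by auto
qed

lemma l_covering_map_relabel:
  assumes cov: "l_covering_map l \<pi> A B" and inj: "inj_on g (vertices A)"
    and eq: "\<And>x. x \<in> vertices A \<Longrightarrow> \<pi>' (g x) = \<pi> x"
  shows "l_covering_map l \<pi>' ((`) g ` A) B"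
proof -
  note A = l_covering_mapD(1)[OF cov] and c = l_covering_mapD(2)[OF cov]
  let ?A = "(`) g ` A"
  have vA: "vertices ?A = g ` vertices A" by (rule vertices_image[OF A inj])
  have img: "\<pi>' ` g ` S = \<pi> ` S" if "S \<subseteq> vertices A" for S
    unfolding image_image using that eq by (intro image_cong) auto
  have surj: "\<pi>' ` vertices ?A = vertices B"
    using l_covering_mapD(3)[OF cov] img[of "vertices A"] unfolding vA by simp
  have hom: "\<pi>' ` s \<in> B" if "s \<in> ?A" for s
    using that img face_subset_vertices[OF A] covering_map_face[OF c A] by auto
  have links: "simplicial_iso \<pi>' (link ?A {y}) (link B {\<pi>' y})" if y: "y \<in> vertices ?A" for y
  proof -
    obtain x where x: "x \<in> vertices A" "y = g x" using y unfolding vA by blast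
    have vL: "vertices (link A {x}) \<subseteq> vertices A"
      using face_subset[OF A, of "{x, _}"] by (auto simp: vertices_link_singleton mem_vertices)
    have "simplicial_iso \<pi>' ((`) g ` link A {x}) (link B {\<pi> x})"
      using simplicial_iso_relabel[OF simplicial_complex_link[OF A] inj_on_subset[OF inj vL]
          covering_map_link_iso[OF c A x(1)]] eq vL by blast
    then show ?thesis using link_image[OF A inj x(1)] x eq by simp
  qed
  have fibre: "{w \<in> vertices ?A. \<pi>' w = v} = g ` {w \<in> vertices A. \<pi> w = v}" for v
    unfolding vA using eq by auto
  have "finite {w \<in> vertices ?A. \<pi>' w = v} \<and> card {w \<in> vertices ?A. \<pi>' w = v} = l"
    if "v \<in> vertices B" for v
    unfolding fibre using l_covering_mapD(4)[OF cov that] inj_on_subset[OF inj]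
    by (auto simp: card_image)
  then show ?thesis
    unfolding l_covering_map_def covering_map_def simplicial_hom_def
    using simplicial_complex_image[OF A inj] surj hom links by blast
qed

lemma l_covering_map_standard_form:
  fixes \<nu> :: "'c \<Rightarrow> 'a" and B :: "'a set set"
  assumes cov: "l_covering_map l \<nu> A B"
  obtains \<phi> and Z :: "('a \<times> nat) set set"
  where "simplicial_iso \<phi> A Z" "l_covering_map l fst Z B" "vertices Z = vertices B \<times> {0..<l}"
    "\<And>x. x \<in> vertices A \<Longrightarrow> fst (\<phi> x) = \<nu> x"
proof -
  note A = l_covering_mapD(1)[OF cov]
  have "\<exists>e. bij_betw e {w \<in> vertices A. \<nu> w = v} {0..<l}" if "v \<in> vertices B" for v
    using l_covering_mapD(4)[OF cov that] ex_bij_betw_finite_nat by metis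
  then obtain e where e: "\<And>v. v \<in> vertices B \<Longrightarrow> bij_betw (e v) {w \<in> vertices A. \<nu> w = v} {0..<l}"
    by metis
  define \<phi> where "\<phi> x = (\<nu> x, e (\<nu> x) x)" for x
  have \<nu>B: "\<nu> x \<in> vertices B" if "x \<in> vertices A" for x
    using that l_covering_mapD(3)[OF cov] by blast
  have inj: "inj_on \<phi> (vertices A)"
  proof (rule inj_onI)
    fix x y assume x: "x \<in> vertices A" and y: "y \<in> vertices A" and "\<phi> x = \<phi> y"
    then have "\<nu> x = \<nu> y" "e (\<nu> x) x = e (\<nu> x) y" unfolding \<phi>_def by auto
    then show "x = y" using e[OF \<nu>B[OF x]] x y unfolding bij_betw_def by (auto dest: inj_onD)
  qed
  have "\<phi> ` vertices A = vertices B \<times> {0..<l}"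
  proof (intro set_eqI iffI)
    fix p assume "p \<in> \<phi> ` vertices A"
    then show "p \<in> vertices B \<times> {0..<l}"
      using e \<nu>B unfolding \<phi>_def bij_betw_def by auto
  next
    fix p assume p: "p \<in> vertices B \<times> {0..<l}"
    then have "snd p \<in> e (fst p) ` {w \<in> vertices A. \<nu> w = fst p}"
      using e[of "fst p"] unfolding bij_betw_def by auto
    then obtain x where "x \<in> vertices A" "\<nu> x = fst p" "snd p = e (fst p) x" by blast
    then have "p = \<phi> x" unfolding \<phi>_def by (simp add: prod_eq_iff)
    then show "p \<in> \<phi> ` vertices A" using \<open>x \<in> vertices A\<close> by blast
  qed
  moreover have "l_covering_map l fst ((`) \<phi> ` A) B"
    by (rule l_covering_map_relabel[OF cov inj]) (simp add: \<phi>_def)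
  ultimately show ?thesis
    using simplicial_iso_image[OF A inj] vertices_image[OF A inj]
    by (intro that[of \<phi> "(`) \<phi> ` A"]) (simp_all add: \<phi>_def)
qed

section \<open>Sheets of a cover of the faces complex\<close>

lemma pure_complex_extend:
  assumes pure: "pure_complex d X" and \<sigma>: "\<sigma> \<in> X" and k: "card \<sigma> + k \<le> d + 1"
  obtains t where "card t = k" "t \<inter> \<sigma> = {}" "t \<union> \<sigma> \<in> X"
proof -
  have X: "simplicial_complex X" using pure unfolding pure_complex_def by blast
  obtain T where T: "T \<in> X" "\<sigma> \<subseteq> T" "card T = d + 1"
    using pure \<sigma> unfolding pure_complex_def by blast
  have "card (T - \<sigma>) = d + 1 - card \<sigma>"
    using T face_finite[OF X] by (simp add: card_Diff_subset finite_subset)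
  then have "k \<le> card (T - \<sigma>)" using k by simp
  then obtain t where t: "t \<subseteq> T - \<sigma>" "card t = k" by (meson obtain_subset_with_card_n)
  then have "t \<union> \<sigma> \<subseteq> T" using T(2) by blast
  then have "t \<union> \<sigma> \<in> X" by (rule face_subset[OF X T(1)])
  then show ?thesis using that t by blast
qed

locale faces_cover =
  fixes X :: "'a set set" and d d1 l :: nat and Z :: "('a set \<times> nat) set set"
  assumes pure: "pure_complex d X" and clique: "clique_complex X" and dim: "3 * d1 + 2 \<le> d"
    and well_connected: "well_connected d1 X"
    and cover: "l_covering_map l fst Z (faces_complex d1 X)"
    and vertices_Z: "vertices Z = vertices (faces_complex d1 X) \<times> {0..<l}"
begin

abbreviation "F \<equiv> faces_complex d1 X"
abbreviation "Flink r \<equiv> faces_complex d1 (link X r)"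

definition "Zlink r = {\<sigma>\<in>Z. fst ` \<sigma> \<in> Flink r}"
definition "linked r = (edge_rel (Zlink r))\<^sup>*"

lemma X_complex: "simplicial_complex X"
  using pure unfolding pure_complex_def by blast

lemma Z_complex: "simplicial_complex Z" and Z_cover: "covering_map fst Z F"
  using l_covering_mapD[OF cover] by blast+

lemma F_complex: "simplicial_complex F"
  by (rule simplicial_complex_faces_complex[OF X_complex])

lemma Flink_iff: "S \<in> Flink r \<longleftrightarrow> S \<in> F \<and> \<Union>S \<inter> r = {} \<and> \<Union>S \<union> r \<in> X"
  by (rule faces_complex_link_iff[OF X_complex])

lemma Flink_antimono: "S \<in> Flink r \<Longrightarrow> r' \<subseteq> r \<Longrightarrow> S \<in> Flink r'"
  unfolding Flink_iff using face_subset[OF X_complex, of "\<Union>S \<union> r" "\<Union>S \<union> r'"] by blast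

lemma F_iff:
  "S \<in> F \<longleftrightarrow> finite S \<and> (\<forall>s\<in>S. s \<in> X \<and> card s = d1 + 1)
     \<and> (\<forall>s\<in>S. \<forall>t\<in>S. s \<noteq> t \<longrightarrow> s \<inter> t = {}) \<and> \<Union>S \<in> X"
  unfolding faces_complex_def faces_of_dim_def by blast

lemma mem_vertices_F: "t \<in> vertices F \<longleftrightarrow> t \<in> X \<and> card t = d1 + 1"
  by (simp add: vertices_faces_complex faces_of_dim_def)

lemma mem_vertices_Flink:
  "t \<in> vertices (Flink r) \<longleftrightarrow> t \<in> vertices F \<and> t \<inter> r = {} \<and> t \<union> r \<in> X"
  by (simp add: mem_vertices Flink_iff)

lemma mem_vertices_Z: "z \<in> vertices Z \<longleftrightarrow> fst z \<in> vertices F \<and> snd z < l"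
  using vertices_Z by (cases z) auto

lemma Zlink_cover: "l_covering_map l fst (Zlink r) (Flink r)"
  unfolding Zlink_def
  by (rule l_covering_map_restrict[OF cover _ simplicial_complex_faces_complex])
    (auto simp: Flink_iff simplicial_complex_link[OF X_complex])

lemma mem_vertices_Zlink: "z \<in> vertices (Zlink r) \<longleftrightarrow> z \<in> vertices Z \<and> fst z \<in> vertices (Flink r)"
  unfolding Zlink_def vertices_def by auto

lemma vertices_Zlink_antimono: "z \<in> vertices (Zlink r) \<Longrightarrow> r' \<subseteq> r \<Longrightarrow> z \<in> vertices (Zlink r')"
  unfolding mem_vertices_Zlink mem_vertices[of "fst z"] using Flink_antimono by blast

lemma F_pairI:
  assumes "a \<in> vertices F" "b \<in> vertices F" "a \<inter> b = {}" "a \<union> b \<in> X"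
  shows "{a, b} \<in> F"
  using assms unfolding F_iff mem_vertices_F by auto

lemma F_tripleI:
  assumes "a \<in> vertices F" "b \<in> vertices F" "c \<in> vertices F"
    "a \<inter> b = {}" "a \<inter> c = {}" "b \<inter> c = {}" "a \<union> b \<union> c \<in> X"
  shows "{a, b, c} \<in> F"
  using assms unfolding F_iff mem_vertices_F by (auto simp: Un_assoc)

lemma Z_edgeD:
  assumes "{y, z} \<in> Z" "y \<noteq> z"
  shows "fst y \<inter> fst z = {}" "fst y \<union> fst z \<in> X"
proof -
  have "{fst z, fst y} \<in> F" "fst y \<noteq> fst z"
    using covering_map_edge[OF Z_cover Z_complex, of z y] assms by (auto simp: insert_commute)
  then show "fst y \<inter> fst z = {}" "fst y \<union> fst z \<in> X"
    unfolding F_iff by (auto simp: Un_commute)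
qed

lemma Z_edge_vertices: "{y, z} \<in> Z \<Longrightarrow> y \<in> vertices Z \<and> z \<in> vertices Z"
  using face_subset_vertices[OF Z_complex] by blast

lemma Z_neighbour_inj: "{z, a} \<in> Z \<Longrightarrow> {z, b} \<in> Z \<Longrightarrow> fst a = fst b \<Longrightarrow> a = b"
  by (rule covering_map_neighbour_inj[OF Z_cover Z_complex])

lemma lift_face_extending:
  assumes "\<tau> \<in> Z" "\<tau> \<noteq> {}" "S \<in> F" "fst ` \<tau> \<subseteq> S"
  obtains \<sigma> where "\<sigma> \<in> Z" "\<tau> \<subseteq> \<sigma>" "fst ` \<sigma> = S"
  using covering_map_lift_face_extending[OF Z_cover Z_complex F_complex assms] by blast

lemma lift_edge:
  assumes "z \<in> vertices Z" "{fst z, t} \<in> F"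
  obtains y where "{z, y} \<in> Z" "fst y = t"
proof -
  obtain \<sigma> where \<sigma>: "\<sigma> \<in> Z" "{z} \<subseteq> \<sigma>" "fst ` \<sigma> = {fst z, t}"
    using lift_face_extending[of "{z}"] assms by (auto simp: mem_vertices)
  then obtain y where "y \<in> \<sigma>" "fst y = t" by (metis imageE insertCI)
  moreover have "{z, y} \<subseteq> \<sigma>" using \<sigma>(2) \<open>y \<in> \<sigma>\<close> by auto
  ultimately show ?thesis using that face_subset[OF Z_complex \<sigma>(1)] by blast
qed

lemma edge_apex:
  assumes "{y, z} \<in> Z" "{fst y, fst z, s} \<in> F"
  obtains a where "{y, a} \<in> Z" "{z, a} \<in> Z" "fst a = s"
proof -
  obtain \<sigma> where \<sigma>: "\<sigma> \<in> Z" "{y, z} \<subseteq> \<sigma>" "fst ` \<sigma> = {fst y, fst z, s}"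
    using lift_face_extending[of "{y, z}"] assms by auto
  then obtain a where "a \<in> \<sigma>" "fst a = s" by (metis imageE insertCI)
  moreover have "{y, a} \<subseteq> \<sigma>" "{z, a} \<subseteq> \<sigma>" using \<sigma>(2) \<open>a \<in> \<sigma>\<close> by auto
  ultimately show ?thesis using that face_subset[OF Z_complex \<sigma>(1)] by blast
qed

lemma exists_vertex_Flink:
  assumes "r \<in> X" "card r + d1 + 1 \<le> d + 1"
  obtains t where "t \<in> vertices (Flink r)"
proof -
  obtain t where "card t = d1 + 1" "t \<inter> r = {}" "t \<union> r \<in> X"
    using pure_complex_extend[OF pure assms(1), of "d1 + 1"] assms(2) by auto
  then show ?thesis
    using that face_subset[OF X_complex, of "t \<union> r" t] by (auto simp: mem_vertices_Flink mem_vertices_F)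
qed

lemma linked_refl: "(a, a) \<in> linked r"
  unfolding linked_def by simp

lemma linked_sym: "(a, b) \<in> linked r \<Longrightarrow> (b, a) \<in> linked r"
  unfolding linked_def by (rule edge_rel_rtrancl_sym)

lemma linked_trans: "(a, b) \<in> linked r \<Longrightarrow> (b, c) \<in> linked r \<Longrightarrow> (a, c) \<in> linked r"
  unfolding linked_def by (rule rtrancl_trans)

lemma linked_edge: "{a, b} \<in> Zlink r \<Longrightarrow> (a, b) \<in> linked r"
  unfolding linked_def by (rule r_into_rtrancl) (simp add: mem_edge_rel)

lemma linked_vertices: "(a, b) \<in> linked r \<Longrightarrow> a \<in> vertices (Zlink r) \<Longrightarrow> b \<in> vertices (Zlink r)"
  unfolding linked_def
  using edge_rel_rtrancl_vertices[OF l_covering_mapD(1)[OF Zlink_cover]] by blast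

lemma Flink_vertex_simply_connected:
  "v \<in> vertices X \<Longrightarrow> simply_connected (Flink {v})"
  using well_connected unfolding well_connected_def by (simp add: mem_vertices)

lemma component_iso:
  assumes v: "v \<in> vertices X" and y: "y \<in> vertices (Zlink {v})"
  defines "C \<equiv> {u \<in> vertices (Zlink {v}). (y, u) \<in> linked {v}}"
  shows "simplicial_iso fst {\<sigma> \<in> Zlink {v}. \<sigma> \<subseteq> C} (Flink {v})"
    and "vertices {\<sigma> \<in> Zlink {v}. \<sigma> \<subseteq> C} = C"
proof -
  have "C \<in> components (Zlink {v})"
    unfolding components_def C_def linked_def using y by blast
  then show "simplicial_iso fst {\<sigma> \<in> Zlink {v}. \<sigma> \<subseteq> C} (Flink {v})"
    using Flink_vertex_simply_connected[OF v] Zlink_cover unfolding simply_connected_def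
    by (blast dest: spec[of _ l])
  show "vertices {\<sigma> \<in> Zlink {v}. \<sigma> \<subseteq> C} = C"
    unfolding C_def vertices_def by auto
qed

lemma linked_lift:
  assumes v: "v \<in> vertices X" and y: "y \<in> vertices (Zlink {v})" and t: "t \<in> vertices (Flink {v})"
  obtains u where "(y, u) \<in> linked {v}" "fst u = t"
  using simplicial_iso_bij[OF component_iso(1)[OF v y]] t
  unfolding component_iso(2)[OF v y] bij_betw_def by (metis (no_types, lifting) imageE mem_Collect_eq)

lemma linked_fst_inj:
  assumes v: "v \<in> vertices X" and y: "y \<in> vertices (Zlink {v})"
    and "(y, u) \<in> linked {v}" "(y, u') \<in> linked {v}" "fst u = fst u'"
  shows "u = u'"
  using simplicial_iso_bij[OF component_iso(1)[OF v y]] assms(3-5) linked_vertices[OF _ y]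
  unfolding component_iso(2)[OF v y] bij_betw_def by (blast dest: inj_onD)

lemma linked_lift_edge:
  assumes v: "v \<in> vertices X" and y: "y \<in> vertices (Zlink {v})"
    and "(y, u) \<in> linked {v}" "(y, u') \<in> linked {v}" "{fst u, fst u'} \<in> Flink {v}"
  shows "{u, u'} \<in> Z"
proof -
  let ?C = "{u \<in> vertices (Zlink {v}). (y, u) \<in> linked {v}}"
  have "{u, u'} \<subseteq> vertices {\<sigma> \<in> Zlink {v}. \<sigma> \<subseteq> ?C}"
    unfolding component_iso(2)[OF v y] using assms(3,4) linked_vertices[OF _ y] by blast
  then have "{u, u'} \<in> {\<sigma> \<in> Zlink {v}. \<sigma> \<subseteq> ?C}"
    using simplicial_iso_face_iff[OF component_iso(1)[OF v y] \<open>{u, u'} \<subseteq> _\<close>] assms(5) by simp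
  then show ?thesis by (simp add: Zlink_def)
qed

text \<open>The \<open>i\<close>-th sheet over \<open>v\<close> is the component of \<open>Zlink {v}\<close> containing the lift
  \<open>(base v, i)\<close> of a fixed vertex of \<open>F(X_v)\<close>; by simple connectivity these are \<open>l\<close>
  distinct components.\<close>

definition base :: "'a \<Rightarrow> 'a set" where
  "base v = (SOME t. t \<in> vertices (Flink {v}))"

definition in_sheet :: "'a \<Rightarrow> nat \<Rightarrow> 'a set \<times> nat \<Rightarrow> bool" where
  "in_sheet v i y \<longleftrightarrow> (y, (base v, i)) \<in> linked {v}"

lemma base_vertex:
  assumes "v \<in> vertices X" shows "base v \<in> vertices (Flink {v})"
proof -
  obtain t where "t \<in> vertices (Flink {v})"
    using exists_vertex_Flink[of "{v}"] assms dim by (auto simp: mem_vertices)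
  then show ?thesis unfolding base_def by (rule someI)
qed

lemma base_lift_vertex:
  assumes "v \<in> vertices X" "i < l" shows "(base v, i) \<in> vertices (Zlink {v})"
  using base_vertex[OF assms(1)] assms(2) by (simp add: mem_vertices_Zlink mem_vertices_Z mem_vertices_Flink)

lemma in_sheet_linked: "in_sheet v i y \<Longrightarrow> (y, y') \<in> linked {v} \<Longrightarrow> in_sheet v i y'"
  unfolding in_sheet_def using linked_sym linked_trans by blast

lemma sheet_unique:
  assumes v: "v \<in> vertices X" and y: "y \<in> vertices (Zlink {v})"
  shows "\<exists>!i. i < l \<and> in_sheet v i y"
proof -
  obtain u where u: "(y, u) \<in> linked {v}" "fst u = base v"
    using linked_lift[OF v y base_vertex[OF v]] by blast
  have "snd u < l" using linked_vertices[OF u(1) y] by (simp add: mem_vertices_Zlink mem_vertices_Z)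
  moreover have "in_sheet v (snd u) y" using u by (metis in_sheet_def prod.collapse)
  moreover have "i = j" if "in_sheet v i y" "in_sheet v j y" for i j
    using linked_fst_inj[OF v y, of "(base v, i)" "(base v, j)"] that unfolding in_sheet_def by simp
  ultimately show ?thesis by blast
qed

lemma sheet_lift:
  assumes v: "v \<in> vertices X" and i: "i < l" and t: "t \<in> vertices (Flink {v})"
  obtains y where "y \<in> vertices (Zlink {v})" "fst y = t" "in_sheet v i y"
proof -
  obtain y where "((base v, i), y) \<in> linked {v}" "fst y = t"
    using linked_lift[OF v base_lift_vertex[OF v i] t] by blast
  then show ?thesis
    using that linked_vertices[OF _ base_lift_vertex[OF v i]] linked_sym
    by (auto simp: in_sheet_def)
qed

section \<open>Comparing sheets over adjacent vertices\<close>

lemma edge_of_vertex_Zlink: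
  assumes "y \<in> vertices (Zlink {v, w})"
  shows "{v, w} \<in> X" "v \<in> vertices X" "w \<in> vertices X"
proof -
  have "fst y \<union> {v, w} \<in> X" using assms by (simp add: mem_vertices_Zlink mem_vertices_Flink)
  then show "{v, w} \<in> X" "v \<in> vertices X" "w \<in> vertices X"
    using face_subset[OF X_complex] by (auto simp: mem_vertices)
qed

lemma linked_transfer_along_path:
  assumes v: "v \<in> vertices X" and y: "y \<in> vertices (Zlink {v, w})"
    and path: "(fst y, t) \<in> (edge_rel (Flink {v, w}))\<^sup>*"
    and u: "(y, u) \<in> linked {v}" "fst u = t"
  shows "(y, u) \<in> linked {w}"
  using path u
proof (induction arbitrary: u rule: rtrancl_induct)
  case base
  have yv: "y \<in> vertices (Zlink {v})" using vertices_Zlink_antimono[OF y] by blast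
  then have "u = y" using linked_fst_inj[OF v yv base.prems(1) linked_refl] base.prems(2) by simp
  then show ?case by (simp add: linked_refl)
next
  case (step t t')
  have yv: "y \<in> vertices (Zlink {v})" using vertices_Zlink_antimono[OF y] by blast
  have tt': "{t, t'} \<in> Flink {v, w}" using step.hyps(2) by (simp add: mem_edge_rel)
  have "t \<in> vertices (Flink {v, w})"
    using edge_rel_rtrancl_vertices[OF simplicial_complex_faces_complex[OF
        simplicial_complex_link[OF X_complex]] step.hyps(1)] y
    by (simp add: mem_vertices_Zlink)
  then have "t \<in> vertices (Flink {v})" using Flink_antimono by (auto simp: mem_vertices)
  then obtain u0 where u0: "(y, u0) \<in> linked {v}" "fst u0 = t" using linked_lift[OF v yv] by blast
  have "{u0, u} \<in> Z"
    using linked_lift_edge[OF v yv u0(1) step.prems(1)] u0(2) step.prems(2) Flink_antimono[OF tt'] by simp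
  moreover have "fst ` {u0, u} \<in> Flink {w}"
    using u0(2) step.prems(2) Flink_antimono[OF tt'] by simp
  ultimately have "(u0, u) \<in> linked {w}" by (simp add: linked_edge Zlink_def)
  then show ?case using step.IH[OF u0] linked_trans by blast
qed

lemma linked_transfer_pos:
  assumes d1: "d1 \<noteq> 0" and vw: "v \<noteq> w"
    and y: "y \<in> vertices (Zlink {v, w})" and y': "y' \<in> vertices (Zlink {v, w})"
    and yy': "(y, y') \<in> linked {v}"
  shows "(y, y') \<in> linked {w}"
proof -
  note vwX = edge_of_vertex_Zlink(1)[OF y]
  have "v \<in> vertices X" using edge_of_vertex_Zlink(2)[OF y] .
  moreover have "connected_complex (Flink {v, w})"
    using well_connected vwX d1 vw unfolding well_connected_def by simp
  then have "(fst y, fst y') \<in> (edge_rel (Flink {v, w}))\<^sup>*"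
    using y y' unfolding connected_complex_def by (simp add: mem_vertices_Zlink)
  ultimately show ?thesis using linked_transfer_along_path y yy' by blast
qed

lemma singleton_vertex_F: "d1 = 0 \<Longrightarrow> p \<in> vertices X \<Longrightarrow> {p} \<in> vertices F"
  by (subst mem_vertices_F) (simp add: mem_vertices)

lemma vertex_F_singleton: "d1 = 0 \<Longrightarrow> t \<in> vertices F \<Longrightarrow> \<exists>p. t = {p}"
  unfolding mem_vertices_F by (simp add: card_1_singleton_iff)

lemma singleton_pair_Flink:
  assumes d1: "d1 = 0" and "p \<noteq> q" "p \<notin> r" "q \<notin> r" and pqr: "insert p (insert q r) \<in> X"
  shows "{{p}, {q}} \<in> Flink r"
proof -
  have "{p} \<in> vertices F" "{q} \<in> vertices F" "{p} \<union> {q} \<in> X"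
    using face_subset[OF X_complex pqr] singleton_vertex_F[OF d1] by (auto simp: mem_vertices)
  then have "{{p}, {q}} \<in> F" using assms(2) by (intro F_pairI) auto
  then show ?thesis using assms(3-5) by (simp add: Flink_iff insert_commute)
qed

lemma singleton_triple_F:
  assumes d1: "d1 = 0" and "p \<noteq> q" "p \<noteq> s" "q \<noteq> s" and pqs: "{p, q, s} \<in> X"
  shows "{{p}, {q}, {s}} \<in> F"
proof -
  have "{p} \<in> vertices F" "{q} \<in> vertices F" "{s} \<in> vertices F"
    using face_subset[OF X_complex pqs] singleton_vertex_F[OF d1] by (auto simp: mem_vertices)
  then show ?thesis using assms(2-5) by (intro F_tripleI) (auto simp: insert_commute)
qed

lemma singleton_vertex_Zlink:
  assumes d1: "d1 = 0" and "x \<in> vertices Z" "fst x = {p}" "p \<notin> r" "insert p r \<in> X"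
  shows "x \<in> vertices (Zlink r)"
proof -
  have "{p} \<in> vertices F"
    by (rule singleton_vertex_F[OF d1])
      (use face_subset[OF X_complex assms(5), of "{p}"] in \<open>simp add: mem_vertices[of p X]\<close>)
  then show ?thesis using assms(2-) by (simp add: mem_vertices_Zlink mem_vertices_Flink)
qed

text \<open>For \<open>d1 = 0\<close> well-connectedness says nothing about the link of the edge \<open>{v, w}\<close>;
  instead, two vertices over it in the same sheet over \<open>v\<close> are joined through lifts of
  triangles \<open>{p, v, w}\<close>.\<close>

lemma linked_transfer_zero_apex:
  assumes d1: "d1 = 0" and vw: "v \<noteq> w" and v: "v \<in> vertices X"
    and x: "x \<in> vertices (Zlink {v})" and y: "y \<in> vertices (Zlink {v, w})"
    and xy: "(x, y) \<in> linked {v}" and xw: "(x, w') \<in> linked {v}" and w': "fst w' = {w}"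
  obtains a where "{w', a} \<in> Z" "fst a = {v}" "{y, a} \<in> Zlink {w}"
proof -
  obtain p where p: "fst y = {p}"
    using vertex_F_singleton[OF d1] y by (auto simp: mem_vertices_Zlink mem_vertices_Flink)
  then have pvw: "p \<noteq> v" "p \<noteq> w" "{p, v, w} \<in> X"
    using y by (auto simp: mem_vertices_Zlink mem_vertices_Flink insert_commute)
  have "{y, w'} \<in> Z"
    using linked_lift_edge[OF v x xy xw] p w' singleton_pair_Flink[OF d1, of p w "{v}"] pvw vw
    by (simp add: insert_commute)
  moreover have "{fst y, fst w', {v}} \<in> F"
    using singleton_triple_F[OF d1, of p w v] p w' pvw vw by (simp add: insert_commute)
  ultimately obtain a where a: "{y, a} \<in> Z" "{w', a} \<in> Z" "fst a = {v}" by (rule edge_apex)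
  moreover have "fst ` {y, a} \<in> Flink {w}"
    using singleton_pair_Flink[OF d1, of p v "{w}"] p a(3) pvw vw by (simp add: insert_commute)
  ultimately show ?thesis using that by (simp add: Zlink_def)
qed

lemma linked_transfer_zero:
  assumes d1: "d1 = 0" and vw: "v \<noteq> w"
    and y: "y \<in> vertices (Zlink {v, w})" and y': "y' \<in> vertices (Zlink {v, w})"
    and yy': "(y, y') \<in> linked {v}"
  shows "(y, y') \<in> linked {w}"
proof -
  note vwX = edge_of_vertex_Zlink(1)[OF y]
  and v = edge_of_vertex_Zlink(2)[OF y] and w = edge_of_vertex_Zlink(3)[OF y]
  have yv: "y \<in> vertices (Zlink {v})" using vertices_Zlink_antimono[OF y] by blast
  have "{w} \<in> vertices (Flink {v})"
    using singleton_vertex_F[OF d1 w] vw vwX by (simp add: mem_vertices_Flink insert_commute)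
  then obtain w' where w': "(y, w') \<in> linked {v}" "fst w' = {w}" using linked_lift[OF v yv] by blast
  obtain a where a: "{w', a} \<in> Z" "fst a = {v}" "{y, a} \<in> Zlink {w}"
    using linked_transfer_zero_apex[OF d1 vw v yv y linked_refl w'] by blast
  obtain a' where a': "{w', a'} \<in> Z" "fst a' = {v}" "{y', a'} \<in> Zlink {w}"
    using linked_transfer_zero_apex[OF d1 vw v yv y' yy' w'] by blast
  have "a' = a" using Z_neighbour_inj[OF a'(1) a(1)] a(2) a'(2) by simp
  then show ?thesis using linked_edge[OF a(3)] linked_edge[OF a'(3)] linked_sym linked_trans by metis
qed

lemma linked_transfer:
  assumes "v \<noteq> w" "y \<in> vertices (Zlink {v, w})" "y' \<in> vertices (Zlink {v, w})"
    "(y, y') \<in> linked {v}"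
  shows "(y, y') \<in> linked {w}"
  using linked_transfer_pos[OF _ assms] linked_transfer_zero[OF _ assms] by blast

lemma neighbours_linked_along_path:
  assumes v: "v \<in> fst z" and y: "{z, y} \<in> Z"
    and path: "(fst y, t) \<in> (edge_rel (Flink (fst z)))\<^sup>*"
    and u: "{z, u} \<in> Z" "fst u = t"
  shows "(y, u) \<in> linked {v}"
  using path u
proof (induction arbitrary: u rule: rtrancl_induct)
  case base
  then show ?case using Z_neighbour_inj[OF y] linked_refl by metis
next
  case (step t t')
  have tt': "{t, t'} \<in> Flink (fst z)" using step.hyps(2) by (simp add: mem_edge_rel)
  then have t: "t \<in> vertices F" "t' \<in> vertices F" "t \<inter> fst z = {}" "t' \<inter> fst z = {}"
    and tt'z: "t \<union> t' \<union> fst z \<in> X"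
    by (auto simp: Flink_iff F_iff mem_vertices_F)
  have z: "z \<in> vertices Z" "fst z \<in> vertices F"
    using Z_edge_vertices[OF y] mem_vertices_Z by blast+
  have "fst z \<union> t \<in> X" by (rule face_subset[OF X_complex tt'z]) blast
  then have "{fst z, t} \<in> F" using t z by (intro F_pairI) (auto simp: Int_commute)
  then obtain u0 where u0: "{z, u0} \<in> Z" "fst u0 = t" using lift_edge[OF z(1)] by blast
  have "{u0, u} \<in> Z"
  proof (cases "t = t'")
    case True
    then have "u = u0" using Z_neighbour_inj[OF step.prems(1) u0(1)] u0(2) step.prems(2) by simp
    then show ?thesis using face_subset[OF Z_complex u0(1), of "{u0}"] by simp
  next
    case False
    have "t \<inter> t' = {}" using tt' False by (auto simp: Flink_iff F_iff)
    then have "{fst z, fst u0, t'} \<in> F"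
      using t z tt'z u0(2) by (intro F_tripleI) (auto simp: Int_commute Un_ac)
    then obtain a where "{z, a} \<in> Z" "{u0, a} \<in> Z" "fst a = t'" using edge_apex[OF u0(1)] by blast
    then show ?thesis using Z_neighbour_inj[OF _ step.prems(1)] step.prems(2) by metis
  qed
  moreover have "fst ` {u0, u} \<in> Flink {v}"
    using Flink_antimono[OF tt'] v u0(2) step.prems(2) by simp
  ultimately have "(u0, u) \<in> linked {v}" by (simp add: linked_edge Zlink_def)
  then show ?case using step.IH[OF u0] linked_trans by blast
qed

lemma neighbours_linked:
  assumes v: "v \<in> fst z" and y: "{z, y} \<in> Z" "y \<noteq> z" and y': "{z, y'} \<in> Z" "y' \<noteq> z"
  shows "(y, y') \<in> linked {v}"
proof -
  have "fst z \<in> vertices F" using Z_edge_vertices[OF y(1)] by (simp add: mem_vertices_Z)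
  then have "connected_complex (Flink (fst z))"
    using well_connected unfolding well_connected_def mem_vertices_F by simp
  moreover have "fst y \<in> vertices (Flink (fst z))" "fst y' \<in> vertices (Flink (fst z))"
    using Z_edgeD[OF y(1)[unfolded insert_commute] y(2)] Z_edgeD[OF y'(1)[unfolded insert_commute] y'(2)]
      Z_edge_vertices[OF y(1)] Z_edge_vertices[OF y'(1)]
    by (auto simp: mem_vertices_Flink mem_vertices_Z Un_commute)
  ultimately have "(fst y, fst y') \<in> (edge_rel (Flink (fst z)))\<^sup>*"
    unfolding connected_complex_def by blast
  then show ?thesis using neighbours_linked_along_path[OF v y(1) _ y'(1)] by blast
qed

section \<open>The covering complex Y\<close>

definition Y_edge :: "'a \<times> nat \<Rightarrow> 'a \<times> nat \<Rightarrow> bool" where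
  "Y_edge a b \<longleftrightarrow> fst a \<noteq> fst b \<and> snd a < l \<and> snd b < l \<and>
     (\<exists>y \<in> vertices (Zlink {fst a, fst b}). in_sheet (fst a) (snd a) y \<and> in_sheet (fst b) (snd b) y)"

lemma Y_edge_sym: "Y_edge a b \<Longrightarrow> Y_edge b a"
  unfolding Y_edge_def by (auto simp: insert_commute)

lemma Y_edgeD:
  assumes "Y_edge (v, i) (w, j)"
  shows "v \<noteq> w" "i < l" "j < l" "{v, w} \<in> X" "v \<in> vertices X" "w \<in> vertices X"
  using assms edge_of_vertex_Zlink unfolding Y_edge_def by auto

lemma Y_edge_sheet:
  assumes e: "Y_edge (v, i) (w, j)" and y: "y \<in> vertices (Zlink {v, w})" and i: "in_sheet v i y"
  shows "in_sheet w j y"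
proof -
  obtain y0 where y0: "y0 \<in> vertices (Zlink {v, w})" "in_sheet v i y0" "in_sheet w j y0"
    using e unfolding Y_edge_def by auto
  have "(y0, y) \<in> linked {v}" using y0(2) i linked_sym linked_trans unfolding in_sheet_def by blast
  then have "(y0, y) \<in> linked {w}" using linked_transfer Y_edgeD(1)[OF e] y0(1) y by blast
  then show ?thesis using in_sheet_linked y0(3) by blast
qed

lemma Y_edge_unique:
  assumes e: "Y_edge (v, i) (w, j)" and e': "Y_edge (v, i) (w, j')"
  shows "j = j'"
proof -
  obtain y where y: "y \<in> vertices (Zlink {v, w})" "in_sheet v i y" "in_sheet w j' y"
    using e' unfolding Y_edge_def by auto
  have "in_sheet w j y" using Y_edge_sheet[OF e y(1,2)] .
  moreover have "y \<in> vertices (Zlink {w})" using vertices_Zlink_antimono[OF y(1)] by blast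
  ultimately show ?thesis
    using sheet_unique[OF Y_edgeD(6)[OF e]] y(3) Y_edgeD(3)[OF e] Y_edgeD(3)[OF e'] by blast
qed

lemma Y_edge_exists:
  assumes vw: "v \<noteq> w" "{v, w} \<in> X" and i: "i < l"
  obtains j where "Y_edge (v, i) (w, j)"
proof -
  have v: "v \<in> vertices X" and w: "w \<in> vertices X"
    using face_subset[OF X_complex vw(2)] by (auto simp: mem_vertices)
  obtain t where t: "t \<in> vertices (Flink {v, w})"
    using exists_vertex_Flink[OF vw(2)] vw(1) dim by auto
  then have "t \<in> vertices (Flink {v})" using Flink_antimono by (auto simp: mem_vertices)
  then obtain y where y: "y \<in> vertices (Zlink {v})" "fst y = t" "in_sheet v i y"
    using sheet_lift[OF v i] by blast
  then have yvw: "y \<in> vertices (Zlink {v, w})" using t by (simp add: mem_vertices_Zlink)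
  then obtain j where "j < l" "in_sheet w j y"
    using sheet_unique[OF w vertices_Zlink_antimono[OF yvw]] by blast
  then show ?thesis using that vw(1) i y(3) yvw unfolding Y_edge_def by auto
qed

lemma Y_edge_triangle_pos:
  assumes d1: "d1 \<noteq> 0" and e: "Y_edge (v, i) (w, j)" and e': "Y_edge (v, i) (w', j')"
    and ww': "w \<noteq> w'" and T: "{v, w, w'} \<in> X"
  shows "Y_edge (w, j) (w', j')"
proof -
  have "card {v, w, w'} \<le> 3" by (simp add: card_insert_le_m1)
  then obtain t where t: "t \<in> vertices (Flink {v, w, w'})"
    using exists_vertex_Flink[OF T] d1 dim by fastforce
  then have "t \<in> vertices (Flink {v})" using Flink_antimono by (auto simp: mem_vertices)
  then obtain y where y: "y \<in> vertices (Zlink {v})" "fst y = t" "in_sheet v i y"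
    using sheet_lift[OF Y_edgeD(5)[OF e] Y_edgeD(2)[OF e]] by blast
  then have y3: "y \<in> vertices (Zlink {v, w, w'})" using t by (simp add: mem_vertices_Zlink)
  have "in_sheet w j y" "in_sheet w' j' y"
    using Y_edge_sheet[OF e _ y(3)] Y_edge_sheet[OF e' _ y(3)] vertices_Zlink_antimono[OF y3] by auto
  moreover have "y \<in> vertices (Zlink {w, w'})" using vertices_Zlink_antimono[OF y3] by auto
  ultimately show ?thesis using ww' Y_edgeD(3)[OF e] Y_edgeD(3)[OF e'] unfolding Y_edge_def by auto
qed

lemma Y_edge_sheet_singleton_neighbour:
  assumes d1: "d1 = 0" and e: "Y_edge (v, i) (w, j)"
    and y: "y \<in> vertices Z" "fst y = {u}" "in_sheet v i y"
    and u: "u \<noteq> v" "u \<noteq> w" "{u, v, w} \<in> X"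
    and a: "{y, a} \<in> Z" "fst a = {v}"
  shows "in_sheet w j a"
proof -
  have vw: "v \<noteq> w" using Y_edgeD(1)[OF e] .
  have "in_sheet w j y"
    using Y_edge_sheet[OF e singleton_vertex_Zlink[OF d1 y(1,2)] y(3)] u vw by (simp add: insert_commute)
  moreover have "{y, a} \<in> Zlink {w}"
    using a y(2) singleton_pair_Flink[OF d1, of u v "{w}"] u vw by (simp add: Zlink_def insert_commute)
  ultimately show ?thesis using in_sheet_linked linked_edge by blast
qed

lemma Y_edge_triangle_zero:
  assumes d1: "d1 = 0" and e: "Y_edge (v, i) (w, j)" and e': "Y_edge (v, i) (w', j')"
    and ww': "w \<noteq> w'" and T: "{v, w, w'} \<in> X"
  shows "Y_edge (w, j) (w', j')"
proof -
  note v = Y_edgeD(5)[OF e] and i = Y_edgeD(2)[OF e] and vw = Y_edgeD(1)[OF e] Y_edgeD(1)[OF e']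
  have w: "w \<in> vertices X" and w': "w' \<in> vertices X" using Y_edgeD(6) e e' by blast+
  have "{w'} \<in> vertices (Flink {v})" "{w} \<in> vertices (Flink {v})"
    using singleton_vertex_F[OF d1] w w' vw face_subset[OF X_complex T]
    by (auto simp: mem_vertices_Flink insert_commute)
  then obtain y y' where y: "y \<in> vertices (Zlink {v})" "fst y = {w'}" "in_sheet v i y"
    and y': "y' \<in> vertices (Zlink {v})" "fst y' = {w}" "in_sheet v i y'"
    using sheet_lift[OF v i] by metis
  have "(y, y') \<in> linked {v}" using y(3) y'(3) linked_sym linked_trans unfolding in_sheet_def by blast
  then have "{y, y'} \<in> Z"
    using linked_lift_edge[OF v y(1) linked_refl] y(2) y'(2)
      singleton_pair_Flink[OF d1, of w' w "{v}"] vw ww' T by (simp add: insert_commute)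
  moreover have "{fst y, fst y', {v}} \<in> F"
    using singleton_triple_F[OF d1, of w' w v] y(2) y'(2) vw ww' T by (simp add: insert_commute)
  ultimately obtain a where a: "{y, a} \<in> Z" "{y', a} \<in> Z" "fst a = {v}" by (rule edge_apex)
  have "in_sheet w j a" "in_sheet w' j' a"
    using Y_edge_sheet_singleton_neighbour[OF d1 e _ y(2,3) _ _ _ a(1,3)]
      Y_edge_sheet_singleton_neighbour[OF d1 e' _ y'(2,3) _ _ _ a(2,3)]
      y(1) y'(1) vw ww' T by (auto simp: mem_vertices_Zlink insert_commute)
  moreover have "a \<in> vertices (Zlink {w, w'})"
    using singleton_vertex_Zlink[OF d1, of a v "{w, w'}"] Z_edge_vertices[OF a(1)] a(3) vw T by simp
  ultimately show ?thesis
    using ww' Y_edgeD(3)[OF e] Y_edgeD(3)[OF e'] unfolding Y_edge_def by auto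
qed

lemma Y_edge_triangle:
  assumes "Y_edge (v, i) (w, j)" "Y_edge (v, i) (w', j')" "w \<noteq> w'" "{v, w, w'} \<in> X"
  shows "Y_edge (w, j) (w', j')"
  using Y_edge_triangle_pos[OF _ assms] Y_edge_triangle_zero[OF _ assms] by blast

definition Y_verts :: "('a \<times> nat) set" where
  "Y_verts = vertices X \<times> {0..<l}"

definition Y :: "('a \<times> nat) set set" where
  "Y = {\<sigma>. finite \<sigma> \<and> \<sigma> \<subseteq> Y_verts \<and> pairwise Y_edge \<sigma>}"

lemma Y_edge_Y_verts: "Y_edge a b \<Longrightarrow> a \<in> Y_verts \<and> b \<in> Y_verts"
  using Y_edgeD[of "fst a" "snd a" "fst b" "snd b"] by (simp add: Y_verts_def mem_Times_iff)

lemma Y_complex: "simplicial_complex Y"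
  unfolding simplicial_complex_def Y_def by (auto intro: finite_subset pairwise_subset)

lemma vertices_Y: "vertices Y = Y_verts"
  unfolding vertices_def Y_def by auto

lemma vertices_link_Y: "vertices (link Y {a}) = {b. Y_edge a b}"
proof -
  have "{a, b} \<in> Y \<longleftrightarrow> a = b \<and> a \<in> Y_verts \<or> Y_edge a b" for b
    using Y_edge_Y_verts[of a b] Y_edge_sym[of a b] by (auto simp: Y_def pairwise_def)
  moreover have "Y_edge a b \<Longrightarrow> b \<noteq> a" for b by (auto simp: Y_edge_def)
  ultimately show ?thesis by (auto simp: vertices_link_singleton)
qed

lemma Y_face_inj: "\<sigma> \<in> Y \<Longrightarrow> inj_on fst \<sigma>"
  unfolding Y_def inj_on_def pairwise_def Y_edge_def by blast

lemma Y_face_image: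
  assumes \<sigma>: "\<sigma> \<in> Y" shows "fst ` \<sigma> \<in> X"
proof -
  have "finite (fst ` \<sigma>)" "fst ` \<sigma> \<subseteq> vertices X" using \<sigma> by (auto simp: Y_def Y_verts_def)
  moreover have "\<forall>u\<in>fst ` \<sigma>. \<forall>w\<in>fst ` \<sigma>. u \<noteq> w \<longrightarrow> {u, w} \<in> X"
  proof (intro ballI impI)
    fix u w assume "u \<in> fst ` \<sigma>" "w \<in> fst ` \<sigma>" "u \<noteq> w"
    then obtain a b where "a \<in> \<sigma>" "b \<in> \<sigma>" "a \<noteq> b" "u = fst a" "w = fst b" by auto
    then have "Y_edge (u, snd a) (w, snd b)" using \<sigma> unfolding Y_def pairwise_def by auto
    then show "{u, w} \<in> X" by (rule Y_edgeD(4))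
  qed
  ultimately show ?thesis using clique unfolding clique_complex_def by blast
qed

lemma Y_star_inj:
  assumes "Y_edge a b" "Y_edge a c" "fst b = fst c" shows "b = c"
  using Y_edge_unique[of "fst a" "snd a" "fst b" "snd b" "snd c"] assms by (metis prod.collapse)

lemma insert_star_Y:
  assumes a: "a \<in> Y_verts" and \<tau>: "\<And>b. b \<in> \<tau> \<Longrightarrow> Y_edge a b" and X: "insert (fst a) (fst ` \<tau>) \<in> X"
  shows "insert a \<tau> \<in> Y"
proof -
  have inj: "inj_on fst \<tau>" using Y_star_inj \<tau> by (meson inj_onI)
  have "finite (fst ` \<tau>)" using face_finite[OF X_complex X] by simp
  then have "finite \<tau>" using finite_imageD[OF _ inj] by blast
  moreover have "Y_edge b c" if "b \<in> \<tau>" "c \<in> \<tau>" "b \<noteq> c" for b c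
  proof -
    have "fst b \<noteq> fst c" using inj that by (meson inj_onD)
    moreover have "{fst a, fst b, fst c} \<in> X"
      by (rule face_subset[OF X_complex X]) (use that in blast)
    ultimately show ?thesis
      using Y_edge_triangle[of "fst a" "snd a" "fst b" "snd b" "fst c" "snd c"] \<tau> that by simp
  qed
  then have "pairwise Y_edge (insert a \<tau>)"
    using \<tau> Y_edge_sym by (auto simp: pairwise_insert pairwise_def)
  moreover have "\<tau> \<subseteq> Y_verts" using \<tau> Y_edge_Y_verts by blast
  ultimately show ?thesis using a by (simp add: Y_def)
qed

lemma Y_link_iso:
  assumes a: "a \<in> Y_verts" shows "simplicial_iso fst (link Y {a}) (link X {fst a})"
proof (rule simplicial_isoI)
  have "fst ` {b. Y_edge a b} = vertices (link X {fst a})"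
  proof (intro set_eqI iffI)
    fix w assume "w \<in> vertices (link X {fst a})"
    then have "fst a \<noteq> w" "{fst a, w} \<in> X" by (auto simp: vertices_link_singleton)
    moreover have "snd a < l" using a by (simp add: Y_verts_def mem_Times_iff)
    ultimately obtain j where "Y_edge (fst a, snd a) (w, j)" using Y_edge_exists by metis
    then show "w \<in> fst ` {b. Y_edge a b}" by force
  next
    fix w assume "w \<in> fst ` {b. Y_edge a b}"
    then obtain j where "Y_edge (fst a, snd a) (w, j)" by force
    then have "fst a \<noteq> w" "{fst a, w} \<in> X" by (rule Y_edgeD(1), rule Y_edgeD(4))
    then show "w \<in> vertices (link X {fst a})" by (auto simp: vertices_link_singleton)
  qed
  then show "bij_betw fst (vertices (link Y {a})) (vertices (link X {fst a}))"
    unfolding vertices_link_Y bij_betw_def using Y_star_inj by (metis inj_onI mem_Collect_eq)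
  fix \<tau> assume "\<tau> \<subseteq> vertices (link Y {a})"
  then have \<tau>: "\<And>b. b \<in> \<tau> \<Longrightarrow> Y_edge a b" by (auto simp: vertices_link_Y)
  then have "fst b \<noteq> fst a" if "b \<in> \<tau>" for b using that unfolding Y_edge_def by metis
  then have "a \<notin> \<tau>" "fst a \<notin> fst ` \<tau>" by (blast, force)
  then show "\<tau> \<in> link Y {a} \<longleftrightarrow> fst ` \<tau> \<in> link X {fst a}"
    using Y_face_image[of "insert a \<tau>"] insert_star_Y[OF a \<tau>] by (auto simp: mem_link)
qed

lemma vertices_Z_nonempty: "vertices Z \<noteq> {}"
proof -
  obtain T where T: "T \<in> X" "card T = d + 1" using pure unfolding pure_complex_def by blast
  moreover have "d1 + 1 \<le> d + 1" using dim by simp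
  ultimately obtain t where t: "t \<subseteq> T" "card t = d1 + 1" by (metis obtain_subset_with_card_n)
  then have "t \<in> vertices F" using face_subset[OF X_complex T(1)] by (simp add: mem_vertices_F)
  then show ?thesis using l_covering_mapD(3)[OF cover] by blast
qed

lemma l_pos: "0 < l"
  using vertices_Z_nonempty by (auto simp: mem_vertices_Z)

lemma Y_cover: "l_covering_map l fst Y X"
proof -
  have fibre: "{w \<in> vertices Y. fst w = v} = Pair v ` {0..<l}" if "v \<in> vertices X" for v
    using that by (auto simp: vertices_Y Y_verts_def)
  have "fst ` vertices Y = vertices X"
    using l_pos by (force simp: vertices_Y Y_verts_def)
  then show ?thesis
    unfolding l_covering_map_def covering_map_def simplicial_hom_def
    using Y_complex Y_face_image Y_link_iso fibre
    by (auto simp: vertices_Y card_image inj_on_def)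
qed

section \<open>The cover as the faces complex of Y\<close>

text \<open>By \<open>neighbours_linked\<close>, all neighbours of \<open>z\<close> lie in the same sheet over each
  \<open>v \<in> fst z\<close>, so \<open>\<kappa> z\<close> picks one sheet index per vertex of \<open>fst z\<close>.\<close>

definition \<kappa> :: "'a set \<times> nat \<Rightarrow> ('a \<times> nat) set" where
  "\<kappa> z = {(v, i). v \<in> fst z \<and> i < l \<and> (\<exists>y. {z, y} \<in> Z \<and> y \<noteq> z \<and> in_sheet v i y)}"

lemma neighbour_exists:
  assumes z: "z \<in> vertices Z" obtains y where "{z, y} \<in> Z" "y \<noteq> z"
proof -
  have fz: "fst z \<in> vertices F" using z by (simp add: mem_vertices_Z)
  then obtain t where t: "t \<in> vertices (Flink (fst z))"
    using exists_vertex_Flink[of "fst z"] dim by (auto simp: mem_vertices_F)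
  then have "{fst z, t} \<in> F" using fz by (intro F_pairI) (auto simp: mem_vertices_Flink Int_commute Un_commute)
  then obtain y where "{z, y} \<in> Z" "fst y = t" using lift_edge[OF z] by blast
  moreover have "t \<noteq> fst z" using t fz by (auto simp: mem_vertices_Flink mem_vertices_F)
  ultimately show ?thesis using that by blast
qed

lemma neighbour_vertex_Zlink:
  assumes "{z, y} \<in> Z" "y \<noteq> z" "r \<subseteq> fst z"
  shows "y \<in> vertices (Zlink r)"
proof -
  have e: "{y, z} \<in> Z" using assms(1) by (simp add: insert_commute)
  have "fst y \<union> r \<subseteq> fst y \<union> fst z" using assms(3) by blast
  then have "fst y \<union> r \<in> X" by (rule face_subset[OF X_complex Z_edgeD(2)[OF e assms(2)]])
  moreover have "fst y \<inter> r = {}" using Z_edgeD(1)[OF e assms(2)] assms(3) by blast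
  moreover have "y \<in> vertices Z" using Z_edge_vertices[OF assms(1)] by blast
  ultimately show ?thesis by (simp add: mem_vertices_Zlink mem_vertices_Flink mem_vertices_Z)
qed

lemma mem_\<kappa>_iff:
  assumes y: "{z, y} \<in> Z" "y \<noteq> z" and v: "v \<in> fst z"
  shows "(v, i) \<in> \<kappa> z \<longleftrightarrow> i < l \<and> in_sheet v i y"
proof
  assume "(v, i) \<in> \<kappa> z"
  then obtain y' where "{z, y'} \<in> Z" "y' \<noteq> z" "i < l" "in_sheet v i y'" by (auto simp: \<kappa>_def)
  then show "i < l \<and> in_sheet v i y"
    using neighbours_linked[OF v] y in_sheet_linked linked_sym by metis
next
  assume "i < l \<and> in_sheet v i y"
  then show "(v, i) \<in> \<kappa> z" using y v unfolding \<kappa>_def by blast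
qed

lemma \<kappa>_unique:
  assumes z: "z \<in> vertices Z" and v: "v \<in> fst z" shows "\<exists>!i. (v, i) \<in> \<kappa> z"
proof -
  obtain y where y: "{z, y} \<in> Z" "y \<noteq> z" using neighbour_exists[OF z] by blast
  have "fst z \<in> X" using z mem_vertices_Z mem_vertices_F by blast
  then have "v \<in> vertices X" using v face_subset[OF X_complex, of "fst z" "{v}"] by (simp add: mem_vertices)
  then show ?thesis
    using sheet_unique neighbour_vertex_Zlink[OF y, of "{v}"] v by (simp add: mem_\<kappa>_iff[OF y v])
qed

lemma fst_mem_\<kappa>: "a \<in> \<kappa> z \<Longrightarrow> fst a \<in> fst z"
  by (auto simp: \<kappa>_def)

lemma fst_\<kappa>:
  assumes z: "z \<in> vertices Z" shows "fst ` \<kappa> z = fst z"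
proof
  show "fst z \<subseteq> fst ` \<kappa> z"
  proof
    fix v assume "v \<in> fst z"
    then obtain i where "(v, i) \<in> \<kappa> z" using \<kappa>_unique[OF z] by blast
    then show "v \<in> fst ` \<kappa> z" by (metis fst_conv imageI)
  qed
qed (auto dest: fst_mem_\<kappa>)

lemma inj_on_fst_\<kappa>:
  assumes z: "z \<in> vertices Z" shows "inj_on fst (\<kappa> z)"
proof (rule inj_onI)
  fix a b assume ab: "a \<in> \<kappa> z" "b \<in> \<kappa> z" "fst a = fst b"
  have "(fst a, snd a) \<in> \<kappa> z" "(fst a, snd b) \<in> \<kappa> z" using ab by (simp_all, metis prod.collapse)
  then have "snd a = snd b" using \<kappa>_unique[OF z fst_mem_\<kappa>[OF ab(1)]] by blast
  then show "a = b" using ab(3) by (simp add: prod_eq_iff)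
qed

lemma \<kappa>_vertex:
  assumes z: "z \<in> vertices Z" shows "\<kappa> z \<in> vertices (faces_complex d1 Y)"
proof -
  obtain y where y: "{z, y} \<in> Z" "y \<noteq> z" using neighbour_exists[OF z] by blast
  have fz: "finite (fst z)" "card (fst z) = d1 + 1"
    using z face_finite[OF X_complex] by (auto simp: mem_vertices_Z mem_vertices_F)
  have card: "card (\<kappa> z) = d1 + 1" using card_image[OF inj_on_fst_\<kappa>[OF z]] fst_\<kappa>[OF z] fz by simp
  have "Y_edge a b" if "a \<in> \<kappa> z" "b \<in> \<kappa> z" "a \<noteq> b" for a b
  proof -
    have ab: "fst a \<in> fst z" "fst b \<in> fst z" "fst a \<noteq> fst b"
      using that inj_on_fst_\<kappa>[OF z] fst_\<kappa>[OF z] by (auto dest: inj_onD)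
    then show ?thesis
      using that mem_\<kappa>_iff[OF y ab(1), of "snd a"] mem_\<kappa>_iff[OF y ab(2), of "snd b"]
        neighbour_vertex_Zlink[OF y, of "{fst a, fst b}"] unfolding Y_edge_def by simp blast
  qed
  moreover have "\<kappa> z \<subseteq> Y_verts"
  proof
    fix a assume "a \<in> \<kappa> z"
    then have "fst a \<in> fst z" "snd a < l" by (auto simp: \<kappa>_def)
    moreover have "fst z \<subseteq> vertices X"
      using z face_subset_vertices[OF X_complex] mem_vertices_Z mem_vertices_F by blast
    ultimately show "a \<in> Y_verts" by (auto simp: Y_verts_def mem_Times_iff)
  qed
  moreover have "finite (\<kappa> z)" using card by (intro card_ge_0_finite) simp
  ultimately have "\<kappa> z \<in> Y" unfolding Y_def pairwise_def by blast
  then show ?thesis using card by (simp add: vertices_faces_complex faces_of_dim_def)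
qed

lemma vertex_Zlink_neq:
  assumes "y \<in> vertices (Zlink r)" "z \<in> vertices Z" "fst z \<subseteq> r"
  shows "y \<noteq> z"
proof
  assume "y = z"
  then have "fst z \<inter> r = {}" "card (fst z) = d1 + 1"
    using assms by (auto simp: mem_vertices_Zlink mem_vertices_Flink mem_vertices_F)
  then show False using assms(3) Int_absorb2[of "fst z" r] by simp
qed

text \<open>This is where \<open>3 * d1 + 2 \<le> d\<close> is needed: a third \<open>d1\<close>-face disjoint from two disjoint
  ones has to fit into a facet of \<open>X\<close> together with them.\<close>

lemma common_neighbour:
  assumes e: "{z, z'} \<in> Z" "z \<noteq> z'"
  obtains y where "{z, y} \<in> Z" "{z', y} \<in> Z" "y \<in> vertices (Zlink (fst z \<union> fst z'))"
proof -
  have zz': "fst z \<inter> fst z' = {}" "fst z \<union> fst z' \<in> X" using Z_edgeD[OF e] by blast+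
  have z: "fst z \<in> vertices F" "fst z' \<in> vertices F"
    using Z_edge_vertices[OF e(1)] by (auto simp: mem_vertices_Z)
  then have "card (fst z \<union> fst z') = 2 * d1 + 2"
    using zz'(1) card_Un_disjoint[of "fst z" "fst z'"] face_finite[OF X_complex]
    by (simp add: mem_vertices_F)
  then obtain t where t: "t \<in> vertices (Flink (fst z \<union> fst z'))"
    using exists_vertex_Flink[OF zz'(2)] dim by auto
  then have "{fst z, fst z', t} \<in> F"
    using z zz' by (intro F_tripleI) (auto simp: mem_vertices_Flink Un_ac)
  then obtain y where "{z, y} \<in> Z" "{z', y} \<in> Z" "fst y = t" using edge_apex[OF e(1)] by blast
  moreover from this have "y \<in> vertices Z" using Z_edge_vertices by blast
  ultimately show ?thesis using that t by (simp add: mem_vertices_Zlink)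
qed

lemma Y_edge_of_\<kappa>:
  assumes e: "{z, z'} \<in> Z" "z \<noteq> z'" and a: "a \<in> \<kappa> z" and b: "b \<in> \<kappa> z'"
  shows "Y_edge a b"
proof -
  obtain y where y: "{z, y} \<in> Z" "{z', y} \<in> Z" "y \<in> vertices (Zlink (fst z \<union> fst z'))"
    using common_neighbour[OF e] by blast
  have "y \<noteq> z" "y \<noteq> z'"
    using vertex_Zlink_neq[OF y(3)] Z_edge_vertices[OF e(1)] by auto
  then have "snd a < l \<and> in_sheet (fst a) (snd a) y" "snd b < l \<and> in_sheet (fst b) (snd b) y"
    using mem_\<kappa>_iff[OF y(1) _ fst_mem_\<kappa>[OF a], of "snd a"]
      mem_\<kappa>_iff[OF y(2) _ fst_mem_\<kappa>[OF b], of "snd b"] a b by simp_all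
  moreover have "fst a \<noteq> fst b"
    using Z_edgeD(1)[OF e] fst_mem_\<kappa>[OF a] fst_mem_\<kappa>[OF b] by auto
  moreover have "y \<in> vertices (Zlink {fst a, fst b})"
    by (rule vertices_Zlink_antimono[OF y(3)]) (use fst_mem_\<kappa>[OF a] fst_mem_\<kappa>[OF b] in blast)
  ultimately show ?thesis unfolding Y_edge_def by blast
qed

lemma inj_on_\<kappa>: "inj_on \<kappa> (vertices Z)"
proof (rule inj_onI)
  fix z z' assume z: "z \<in> vertices Z" and z': "z' \<in> vertices Z" and eq: "\<kappa> z = \<kappa> z'"
  have s: "fst z = fst z'" using fst_\<kappa>[OF z] fst_\<kappa>[OF z'] eq by simp
  obtain y where y: "{z, y} \<in> Z" "y \<noteq> z" using neighbour_exists[OF z] by blast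
  have "{fst z', fst y} \<in> F"
    using covering_map_face[OF Z_cover Z_complex y(1)] s by simp
  then obtain y' where y': "{z', y'} \<in> Z" "fst y' = fst y" using lift_edge[OF z'] by blast
  have "y' \<noteq> z'" using y' y(2) Z_edgeD(1)[of z y] y(1) s z
    by (metis covering_map_edge(1)[OF Z_cover Z_complex])
  have "fst z \<noteq> {}" using z by (auto simp: mem_vertices_Z mem_vertices_F)
  then obtain v where v: "v \<in> fst z" by blast
  then obtain i where "(v, i) \<in> \<kappa> z" using \<kappa>_unique[OF z] by blast
  then have "in_sheet v i y" "in_sheet v i y'"
    using mem_\<kappa>_iff[OF y v] mem_\<kappa>_iff[OF y'(1) \<open>y' \<noteq> z'\<close>] eq s v by auto
  then have "(y, y') \<in> linked {v}" using linked_sym linked_trans unfolding in_sheet_def by blast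
  moreover have "v \<in> vertices X" "y \<in> vertices (Zlink {v})"
    using neighbour_vertex_Zlink[OF y, of "{v}"] v edge_of_vertex_Zlink[of y v v] by auto
  ultimately have "y' = y" using linked_fst_inj[OF _ _ linked_refl] y'(2) by metis
  then show "z = z'" using Z_neighbour_inj[of y z z'] y(1) y'(1) s by (simp add: insert_commute)
qed

lemma Y_face_subset_\<kappa>:
  assumes y: "{z, y} \<in> Z" "y \<noteq> z" and \<sigma>: "\<sigma> \<in> Y" "fst ` \<sigma> \<subseteq> fst z"
    and a0: "a0 \<in> \<sigma>" "in_sheet (fst a0) (snd a0) y"
  shows "\<sigma> \<subseteq> \<kappa> z"
proof
  fix a assume a: "a \<in> \<sigma>"
  have "in_sheet (fst a) (snd a) y"
  proof (cases "a = a0")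
    case False
    then have e: "Y_edge (fst a0, snd a0) (fst a, snd a)"
      using \<sigma>(1) a a0(1) by (simp add: Y_def pairwise_def)
    have "y \<in> vertices (Zlink {fst a0, fst a})"
      by (rule neighbour_vertex_Zlink[OF y]) (use \<sigma>(2) a a0(1) in blast)
    then show ?thesis using Y_edge_sheet[OF e _ a0(2)] by blast
  qed (use a0 in simp)
  moreover have "snd a < l" using \<sigma>(1) a by (auto simp: Y_def Y_verts_def)
  ultimately show "a \<in> \<kappa> z" using mem_\<kappa>_iff[OF y, of "fst a" "snd a"] \<sigma>(2) a by auto
qed

lemma \<kappa>_surj:
  assumes st: "st \<in> vertices (faces_complex d1 Y)"
  shows "st \<in> \<kappa> ` vertices Z"
proof -
  have stY: "st \<in> Y" and cst: "card st = d1 + 1"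
    using st by (auto simp: vertices_faces_complex faces_of_dim_def)
  let ?s = "fst ` st"
  have s: "?s \<in> vertices F"
    using Y_face_image[OF stY] card_image[OF Y_face_inj[OF stY]] cst by (simp add: mem_vertices_F)
  have "st \<noteq> {}" using cst by auto
  then obtain a0 where a0: "a0 \<in> st" by blast
  obtain t where t: "t \<in> vertices (Flink ?s)"
    using exists_vertex_Flink[of ?s] s dim by (auto simp: mem_vertices_F)
  have "fst a0 \<in> vertices X" "snd a0 < l" using stY a0 by (auto simp: Y_def Y_verts_def)
  moreover have "t \<in> vertices (Flink {fst a0})"
    using t a0 face_subset[OF X_complex] by (auto simp: mem_vertices_Flink)
  ultimately obtain y where y: "y \<in> vertices (Zlink {fst a0})" "fst y = t" "in_sheet (fst a0) (snd a0) y"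
    using sheet_lift by blast
  have yZ: "y \<in> vertices Z" using y(1) by (simp add: mem_vertices_Zlink)
  have "{fst y, ?s} \<in> F" using t s y(2) by (intro F_pairI) (auto simp: mem_vertices_Flink Un_commute)
  then obtain z where z: "{y, z} \<in> Z" "fst z = ?s" by (rule lift_edge[OF yZ])
  have zZ: "z \<in> vertices Z" using Z_edge_vertices[OF z(1)] by blast
  have zy: "{z, y} \<in> Z" "y \<noteq> z" using z(1) vertex_Zlink_neq[of y ?s z] t y(2) zZ z(2)
    by (auto simp: insert_commute mem_vertices_Zlink)
  have "st \<subseteq> \<kappa> z" using Y_face_subset_\<kappa>[OF zy stY _ a0 y(3)] z(2) by simp
  then have "st = \<kappa> z"
    using inj_on_image_eq_iff[OF inj_on_fst_\<kappa>[OF zZ] \<open>st \<subseteq> \<kappa> z\<close> order_refl]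
    by (simp add: fst_\<kappa>[OF zZ] z(2))
  then show ?thesis using zZ by blast
qed

lemma \<kappa>_in_Y: "z \<in> vertices Z \<Longrightarrow> \<kappa> z \<in> Y"
  using \<kappa>_vertex by (simp add: vertices_faces_complex faces_of_dim_def)

lemma \<kappa>_image_face:
  assumes S: "S \<in> Z" shows "\<kappa> ` S \<in> faces_complex d1 Y"
proof -
  have SZ: "S \<subseteq> vertices Z" using face_subset_vertices[OF Z_complex S] .
  have "Y_edge a b" if "a \<in> \<kappa> z" "b \<in> \<kappa> z'" "z \<in> S" "z' \<in> S" "a \<noteq> b" for a b z z'
  proof (cases "z = z'")
    case True
    then have "\<kappa> z \<in> Y" using \<kappa>_in_Y SZ that(3) by blast
    then show ?thesis using True that unfolding Y_def pairwise_def by blast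
  next
    case False
    then show ?thesis using Y_edge_of_\<kappa> face_subset[OF Z_complex S, of "{z, z'}"] that by simp
  qed
  then have "pairwise Y_edge (\<Union>(\<kappa> ` S))" unfolding pairwise_def by blast
  moreover have "finite (\<Union>(\<kappa> ` S))" "\<Union>(\<kappa> ` S) \<subseteq> Y_verts"
    using \<kappa>_in_Y SZ face_finite[OF Z_complex S] by (auto simp: Y_def)
  ultimately have "\<Union>(\<kappa> ` S) \<in> Y" by (simp add: Y_def)
  moreover have "\<kappa> z \<inter> \<kappa> z' = {}" if "z \<in> S" "z' \<in> S" "\<kappa> z \<noteq> \<kappa> z'" for z z'
  proof -
    have "z \<noteq> z'" "{z, z'} \<in> Z" using that face_subset[OF Z_complex S, of "{z, z'}"] by auto
    then have "fst z \<inter> fst z' = {}" by (rule Z_edgeD(1)[rotated])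
    then show ?thesis using fst_mem_\<kappa> by blast
  qed
  moreover have "\<kappa> ` S \<subseteq> faces_of_dim Y d1"
    using \<kappa>_vertex SZ by (auto simp: vertices_faces_complex)
  moreover have "finite (\<kappa> ` S)" using face_finite[OF Z_complex S] by simp
  ultimately show ?thesis unfolding faces_complex_def by blast
qed

lemma \<kappa>_determined:
  assumes e: "{z0, zh} \<in> Z" "z0 \<noteq> zh" and z: "z \<in> vertices Z" "fst zh = fst z"
    and a0: "a0 \<in> \<kappa> z0" and edges: "\<And>b. b \<in> \<kappa> z \<Longrightarrow> Y_edge a0 b"
  shows "zh = z"
proof -
  have zh: "zh \<in> vertices Z" using Z_edge_vertices[OF e(1)] by blast
  have "\<kappa> zh \<subseteq> \<kappa> z"
  proof
    fix b assume b: "b \<in> \<kappa> zh"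
    then have "fst b \<in> fst ` \<kappa> z" using fst_\<kappa>[OF z(1)] fst_mem_\<kappa>[OF b] z(2) by simp
    then obtain b' where b': "b' \<in> \<kappa> z" "fst b' = fst b" by force
    have "b' = b" using Y_star_inj[OF edges[OF b'(1)] Y_edge_of_\<kappa>[OF e a0 b] b'(2)] .
    then show "b \<in> \<kappa> z" using b'(1) by simp
  qed
  then have "\<kappa> zh = \<kappa> z"
    using inj_on_image_eq_iff[OF inj_on_fst_\<kappa>[OF z(1)] \<open>\<kappa> zh \<subseteq> \<kappa> z\<close> order_refl]
    by (simp add: fst_\<kappa>[OF z(1)] fst_\<kappa>[OF zh] z(2))
  then show ?thesis using inj_on_\<kappa> zh z(1) by (blast dest: inj_onD)
qed

lemma \<kappa>_image_face_disjoint: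
  assumes SZ: "S \<subseteq> vertices Z" and K: "\<kappa> ` S \<in> faces_complex d1 Y"
    and z: "z \<in> S" "z' \<in> S" "z \<noteq> z'"
  shows "fst z \<inter> fst z' = {}"
proof (rule ccontr)
  assume "fst z \<inter> fst z' \<noteq> {}"
  then obtain v where v: "v \<in> fst z" "v \<in> fst z'" by blast
  have zZ: "z \<in> vertices Z" "z' \<in> vertices Z" using SZ z by auto
  obtain i i' where i: "(v, i) \<in> \<kappa> z" "(v, i') \<in> \<kappa> z'"
    using \<kappa>_unique[OF zZ(1) v(1)] \<kappa>_unique[OF zZ(2) v(2)] by blast
  have "inj_on fst (\<Union>(\<kappa> ` S))" using K Y_face_inj by (simp add: faces_complex_def)
  moreover have "(v, i) \<in> \<Union>(\<kappa> ` S)" "(v, i') \<in> \<Union>(\<kappa> ` S)" using i z(1,2) by blast+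
  ultimately have "(v, i) = (v, i')" by (metis fst_conv inj_onD)
  moreover have "\<kappa> z \<noteq> \<kappa> z'" using inj_onD[OF inj_on_\<kappa> _ zZ] z(3) by blast
  ultimately show False using i z(1,2) K unfolding faces_complex_def by blast
qed

lemma fst_image_F_of_\<kappa>_image:
  assumes SZ: "S \<subseteq> vertices Z" and K: "\<kappa> ` S \<in> faces_complex d1 Y"
  shows "fst ` S \<in> F"
proof -
  have U: "\<Union>(\<kappa> ` S) \<in> Y" using K by (simp add: faces_complex_def)
  have "fst ` \<Union>(\<kappa> ` S) = (\<Union>z\<in>S. fst ` \<kappa> z)" by (simp add: image_UN)
  also have "\<dots> = \<Union>(fst ` S)" using SZ fst_\<kappa> by (intro SUP_cong refl) blast
  finally have "\<Union>(fst ` S) \<in> X" using Y_face_image[OF U] by simp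
  moreover have "finite S"
    using K finite_imageD inj_on_subset[OF inj_on_\<kappa> SZ] by (auto simp: faces_complex_def)
  moreover have "\<forall>s\<in>fst ` S. s \<in> X \<and> card s = d1 + 1"
    using SZ by (auto simp: mem_vertices_Z mem_vertices_F)
  moreover have "\<forall>s\<in>fst ` S. \<forall>t\<in>fst ` S. s \<noteq> t \<longrightarrow> s \<inter> t = {}"
    using \<kappa>_image_face_disjoint[OF SZ K] by blast
  ultimately show ?thesis unfolding F_iff by blast
qed

lemma \<kappa>_image_face_lift:
  assumes SZ: "S \<subseteq> vertices Z" and K: "\<kappa> ` S \<in> faces_complex d1 Y"
    and \<sigma>: "\<sigma> \<in> Z" "z0 \<in> \<sigma>" "fst ` \<sigma> = fst ` S" and z: "z0 \<in> S" "z \<in> S" "z \<noteq> z0"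
  shows "z \<in> \<sigma>"
proof -
  obtain zh where zh: "zh \<in> \<sigma>" "fst zh = fst z" using \<sigma>(3) z(2) by (metis imageE imageI)
  have ne: "fst z0 \<noteq> {}" "fst z \<noteq> {}" using SZ z by (auto simp: mem_vertices_Z mem_vertices_F)
  then obtain a0 where a0: "a0 \<in> \<kappa> z0" using fst_\<kappa> SZ z(1) by blast
  have d: "fst z0 \<inter> fst z = {}" using \<kappa>_image_face_disjoint[OF SZ K z(1,2)] z(3) by blast
  then have "z0 \<noteq> zh" using ne zh(2) by auto
  moreover have "{z0, zh} \<in> Z" using face_subset[OF Z_complex \<sigma>(1)] \<sigma>(2) zh(1) by simp
  moreover have "Y_edge a0 b" if "b \<in> \<kappa> z" for b
  proof -
    have "a0 \<noteq> b" using fst_mem_\<kappa>[OF a0] fst_mem_\<kappa>[OF that] d by auto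
    moreover have "a0 \<in> \<Union>(\<kappa> ` S)" "b \<in> \<Union>(\<kappa> ` S)" using a0 that z by blast+
    ultimately show ?thesis using K unfolding faces_complex_def Y_def pairwise_def by blast
  qed
  ultimately have "zh = z" using \<kappa>_determined SZ z(2) zh(2) a0 by blast
  then show ?thesis using zh(1) by simp
qed

lemma \<kappa>_image_face_imp_face:
  assumes SZ: "S \<subseteq> vertices Z" and K: "\<kappa> ` S \<in> faces_complex d1 Y"
  shows "S \<in> Z"
proof (cases "S = {}")
  case True
  then show ?thesis using empty_face[OF Z_complex] vertices_Z_nonempty by (auto simp: vertices_def)
next
  case False
  then obtain z0 where z0: "z0 \<in> S" by blast
  moreover have "{z0} \<in> Z" using SZ z0 by (auto simp: mem_vertices)
  ultimately obtain \<sigma> where \<sigma>: "\<sigma> \<in> Z" "{z0} \<subseteq> \<sigma>" "fst ` \<sigma> = fst ` S"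
    using lift_face_extending[of "{z0}" "fst ` S"] fst_image_F_of_\<kappa>_image[OF SZ K] by blast
  then have "S \<subseteq> \<sigma>" using \<kappa>_image_face_lift[OF SZ K \<sigma>(1) _ \<sigma>(3) z0] by blast
  then show ?thesis using face_subset[OF Z_complex \<sigma>(1)] by blast
qed

lemma \<kappa>_iso: "simplicial_iso \<kappa> Z (faces_complex d1 Y)"
proof (rule simplicial_isoI)
  show "bij_betw \<kappa> (vertices Z) (vertices (faces_complex d1 Y))"
    unfolding bij_betw_def using inj_on_\<kappa> \<kappa>_vertex \<kappa>_surj by blast
  show "S \<in> Z \<longleftrightarrow> \<kappa> ` S \<in> faces_complex d1 Y" if "S \<subseteq> vertices Z" for S
    using \<kappa>_image_face \<kappa>_image_face_imp_face[OF that] by blast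
qed

end

theorem lemma3p7:
  fixes X :: "'a set set" and d d1 l :: nat
    and Xt :: "'c set set" and \<nu> :: "'c \<Rightarrow> 'a set"
  assumes "pure_complex d X"
    and "clique_complex X"
    and "3 * d1 + 2 \<le> d"
    and "well_connected d1 X"
    and "l_covering_map l \<nu> Xt (faces_complex d1 X)"
  shows "\<exists>(Y :: ('a \<times> nat) set set) \<rho> \<iota>.
           l_covering_map l \<rho> Y X
         \<and> simplicial_iso \<iota> (faces_complex d1 Y) Xt
         \<and> (\<forall>s\<in>vertices (faces_complex d1 Y). \<nu> (\<iota> s) = \<rho> ` s)"
proof -
  \<comment> \<open>\<open>simply_connected\<close> only speaks about covers with vertices \<open>(vertex, index)\<close>\<close>
  obtain \<phi> and Z :: "('a set \<times> nat) set set" where \<phi>: "simplicial_iso \<phi> Xt Z"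
    and Z: "l_covering_map l fst Z (faces_complex d1 X)"
      "vertices Z = vertices (faces_complex d1 X) \<times> {0..<l}"
    and fst_\<phi>: "\<And>x. x \<in> vertices Xt \<Longrightarrow> fst (\<phi> x) = \<nu> x"
    using l_covering_map_standard_form[OF assms(5)] by blast
  interpret faces_cover X d d1 l Z using assms Z by unfold_locales
  have iso: "simplicial_iso (\<kappa> \<circ> \<phi>) Xt (faces_complex d1 Y)"
    by (rule simplicial_iso_comp[OF \<phi> \<kappa>_iso])
  define \<iota> where "\<iota> = inv_into (vertices Xt) (\<kappa> \<circ> \<phi>)"
  have "\<nu> (\<iota> s) = fst ` s" if "s \<in> vertices (faces_complex d1 Y)" for s
  proof -
    note bij = simplicial_iso_bij[OF iso]
    have "\<iota> s \<in> vertices Xt" unfolding \<iota>_def by (rule bij_betw_apply[OF bij_betw_inv_into[OF bij] that])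
    moreover have "\<kappa> (\<phi> (\<iota> s)) = s" using bij_betw_inv_into_right[OF bij that] by (simp add: \<iota>_def)
    ultimately show ?thesis
      using fst_\<phi> fst_\<kappa> simplicial_iso_bij[OF \<phi>] by (metis bij_betwE)
  qed
  then show ?thesis
    using Y_cover simplicial_iso_inv[OF iso] unfolding \<iota>_def by blast
qed

end
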